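(* If $\Gamma$ is a countable discrete group containing a central element of infinite order, then $\mathbb{C}\Gamma$ is not $C^*_r$-unique.
   Context: $\mathbb{C}\Gamma$ is the complex group algebra. $\mathbb{C}\Gamma$ is called $C^*_r$-unique if no $C^*$-norm on $\mathbb{C}\Gamma$ is properly majorised by the reduced $C^*$-norm (the norm from the left regular representation $\lambda:\mathbb{C}\Gamma\to\mathbb{B}(\ell^2\Gamma)$), i.e. there is no $C^*$-norm $\|\cdot\|$ on $\mathbb{C}\Gamma$ with $\|a\|\le\|\lambda(a)\|$ for all $a$ and strict inequality for some $a$. *)

theory Defs
  imports "HOL-Analysis.Analysis" "HOL-Library.Countable"
begin

text \<open>A (discrete) group Gamma is modelled as a type of class group_add (the group
operation is written +, it need not be commutative).\<close>

definition group_alg :: "('g::group_add \<Rightarrow> complex) set" where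
  "group_alg = {a. finite {g. a g \<noteq> 0}}"

text \<open>Convolution; for a finitely supported a and any xi this is the left regular
representation lambda(a) applied to xi, and on the group algebra it is the product.\<close>
definition conv :: "('g::group_add \<Rightarrow> complex) \<Rightarrow> ('g \<Rightarrow> complex) \<Rightarrow> ('g \<Rightarrow> complex)" where
  "conv a \<xi> = (\<lambda>g. \<Sum>h\<in>{h. a h \<noteq> 0}. a h * \<xi> (- h + g))"

definition inv_star :: "('g::group_add \<Rightarrow> complex) \<Rightarrow> ('g \<Rightarrow> complex)" where
  "inv_star a = (\<lambda>g. cnj (a (- g)))"

definition l2 :: "('g \<Rightarrow> complex) set" where
  "l2 = {\<xi>. (\<lambda>g. (cmod (\<xi> g))^2) summable_on UNIV}"

definition l2norm :: "('g \<Rightarrow> complex) \<Rightarrow> real" where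
  "l2norm \<xi> = sqrt (\<Sum>\<^sub>\<infinity>g. (cmod (\<xi> g))^2)"

definition reduced_norm :: "('g::group_add \<Rightarrow> complex) \<Rightarrow> real" where
  "reduced_norm a = Sup {l2norm (conv a \<xi>) | \<xi>. \<xi> \<in> l2 \<and> l2norm \<xi> \<le> 1}"

definition is_cstar_norm :: "(('g::group_add \<Rightarrow> complex) \<Rightarrow> real) \<Rightarrow> bool" where
  "is_cstar_norm N \<longleftrightarrow>
     (\<forall>a\<in>group_alg. 0 \<le> N a \<and> (N a = 0 \<longleftrightarrow> a = (\<lambda>_. 0))) \<and>
     (\<forall>a\<in>group_alg. \<forall>b\<in>group_alg. N (\<lambda>g. a g + b g) \<le> N a + N b) \<and>
     (\<forall>c. \<forall>a\<in>group_alg. N (\<lambda>g. c * a g) = cmod c * N a) \<and>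
     (\<forall>a\<in>group_alg. \<forall>b\<in>group_alg. N (conv a b) \<le> N a * N b) \<and>
     (\<forall>a\<in>group_alg. N (conv (inv_star a) a) = (N a)^2)"

definition cstar_r_unique :: "'g::group_add itself \<Rightarrow> bool" where
  "cstar_r_unique _ \<longleftrightarrow>
     \<not> (\<exists>N :: ('g \<Rightarrow> complex) \<Rightarrow> real. is_cstar_norm N \<and>
          (\<forall>a\<in>group_alg. N a \<le> reduced_norm a) \<and>
          (\<exists>a\<in>group_alg. N a < reduced_norm a))"

definition central :: "'g::group_add \<Rightarrow> bool" where
  "central z \<longleftrightarrow> (\<forall>g. z + g = g + z)"

definition infinite_order :: "'g::group_add \<Rightarrow> bool" where
  "infinite_order z \<longleftrightarrow> (\<forall>n::nat. n > 0 \<longrightarrow> (((+) z) ^^ n) 0 \<noteq> 0)"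

end

theory Submission
  imports Defs "HOL-Library.Groups_Big_Fun" "HOL-Computational_Algebra.Polynomial"
    "HOL-Real_Asymp.Real_Asymp"
begin

text \<open>
  Let z be central of infinite order. For |\<omega>| = 1 let \<phi>_\<omega> be the character j z \<mapsto> \<omega>^j of the
  subgroup generated by z, extended by zero to \<Gamma>. The form B_\<omega>(x, y) = \<Sum> x(g) cnj(y(h)) \<phi>_\<omega>(h\<inverse> g)
  is the inner product of the representation induced from that character. It is the limit of
  \<langle>x * u_N, y * u_N\<rangle> / N for the approximate eigenvectors u_N = \<Sum>{cnj(\<omega>)^n \<delta>_{nz} | n < N} of
  translation by z, so B_\<omega> is positive semidefinite and left convolution by a has norm at most
  \<parallel>\<lambda>(a)\<parallel> with respect to it.

  The supremum of these operator norms over the half circle Re \<omega> \<le> 0 is a C*-norm below the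
  reduced norm. It is faithful because \<omega>^M B_\<omega>(a, a) is a polynomial in \<omega> whose coefficient
  at \<omega>^M is \<parallel>a\<parallel>_2^2 > 0, so it vanishes at only finitely many points of the infinite half
  circle. For a = \<delta>_0 + \<delta>_z one has B_\<omega>(a * v, a * v) = (2 + 2 Re \<omega>) B_\<omega>(v, v), so the new norm
  of a is at most \<surd>2, whereas \<parallel>a * a\<parallel>_2 \<ge> \<surd>5 > 2 = \<surd>2 \<parallel>a\<parallel>_2 forces \<parallel>\<lambda>(a)\<parallel> > \<surd>2.
\<close>

section \<open>The group algebra\<close>

definition supp :: "('g \<Rightarrow> complex) \<Rightarrow> 'g set" where
  "supp a = {g. a g \<noteq> 0}"

definition transl :: "'g::group_add \<Rightarrow> ('g \<Rightarrow> complex) \<Rightarrow> ('g \<Rightarrow> complex)" where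
  "transl k \<xi> = (\<lambda>g. \<xi> (- k + g))"

definition delta :: "'g \<Rightarrow> complex \<Rightarrow> ('g \<Rightarrow> complex)" where
  "delta a c = (\<lambda>g. if g = a then c else 0)"

lemma minus_add_eq_0_iff: "- h + g = (0::'g::group_add) \<longleftrightarrow> g = h"
  by (metis add_minus_cancel add.right_neutral)

lemma group_alg_iff_finite_supp: "a \<in> group_alg \<longleftrightarrow> finite (supp a)"
  by (simp add: group_alg_def supp_def)

lemma finite_supp_mult_left: "a \<in> group_alg \<Longrightarrow> finite {h. a h * f h \<noteq> 0}"
  by (rule finite_subset[of _ "supp a"]) (auto simp: group_alg_iff_finite_supp supp_def)

lemma supp_transl: "supp (transl k v) = (+) k ` supp v"
  by (auto simp: supp_def transl_def image_iff add.assoc[symmetric]) (metis add_minus_cancel)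

lemma supp_inv_star: "supp (inv_star a) = uminus ` supp a"
  by (auto simp: supp_def inv_star_def image_iff) (metis minus_minus)

lemma transl_transl: "transl g (transl h u) = transl (g + h) u"
  by (simp only: transl_def minus_add add.assoc)

lemma transl_0 [simp]: "transl 0 u = u"
  by (simp add: transl_def)

lemma transl_delta: "transl k (delta a \<alpha>) = delta (k + a) \<alpha>"
proof -
  have "(- k + g = a) \<longleftrightarrow> (g = k + a)" for g
    by (metis add_minus_cancel minus_add_cancel)
  then show ?thesis by (simp add: transl_def delta_def fun_eq_iff)
qed

lemma inv_star_inv_star [simp]: "inv_star (inv_star a) = a"
  by (simp add: inv_star_def)

lemma group_alg_zero [simp]: "(\<lambda>_. 0) \<in> group_alg"
  by (simp add: group_alg_iff_finite_supp supp_def)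

lemma group_alg_add: "a \<in> group_alg \<Longrightarrow> b \<in> group_alg \<Longrightarrow> (\<lambda>g. a g + b g) \<in> group_alg"
  unfolding group_alg_iff_finite_supp supp_def
  by (rule finite_subset[of _ "{g. a g \<noteq> 0} \<union> {g. b g \<noteq> 0}"]) auto

lemma group_alg_smult: "a \<in> group_alg \<Longrightarrow> (\<lambda>g. c * a g) \<in> group_alg"
  unfolding group_alg_iff_finite_supp supp_def
  by (rule finite_subset[of _ "{g. a g \<noteq> 0}"]) auto

lemma group_alg_sum:
  "finite I \<Longrightarrow> (\<And>i. i \<in> I \<Longrightarrow> f i \<in> group_alg) \<Longrightarrow> (\<lambda>g. \<Sum>i\<in>I. f i g) \<in> group_alg"
  by (induction I rule: finite_induct) (auto intro: group_alg_add)

lemma group_alg_transl: "a \<in> group_alg \<Longrightarrow> transl k a \<in> group_alg"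
  by (simp add: group_alg_iff_finite_supp supp_transl)

lemma group_alg_inv_star: "a \<in> group_alg \<Longrightarrow> inv_star a \<in> group_alg"
  by (simp add: group_alg_iff_finite_supp supp_inv_star)

lemma group_alg_delta: "delta a c \<in> group_alg"
  unfolding group_alg_iff_finite_supp supp_def delta_def by (rule finite_subset[of _ "{a}"]) auto

lemma supp_conv_subset: "supp (conv a \<xi>) \<subseteq> (\<lambda>(h, k). h + k) ` (supp a \<times> supp \<xi>)"
proof
  fix g assume "g \<in> supp (conv a \<xi>)"
  then obtain h where "a h * \<xi> (- h + g) \<noteq> 0"
    unfolding supp_def conv_def by (meson sum.not_neutral_contains_not_neutral mem_Collect_eq)
  then have "(h, - h + g) \<in> supp a \<times> supp \<xi>" by (simp add: supp_def)
  then show "g \<in> (\<lambda>(h, k). h + k) ` (supp a \<times> supp \<xi>)"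
    by (rule rev_image_eqI) (simp add: add.assoc[symmetric])
qed

lemma group_alg_conv: "a \<in> group_alg \<Longrightarrow> \<xi> \<in> group_alg \<Longrightarrow> conv a \<xi> \<in> group_alg"
  unfolding group_alg_iff_finite_supp by (blast intro: finite_subset[OF supp_conv_subset])

lemma conv_eq_Sum_any: "a \<in> group_alg \<Longrightarrow> conv a \<xi> g = Sum_any (\<lambda>h. a h * \<xi> (- h + g))"
  by (auto simp: conv_def group_alg_iff_finite_supp supp_def
      intro: Sum_any.expand_superset[symmetric])

lemma conv_eq_sum_transl: "conv a \<xi> = (\<lambda>g. \<Sum>h\<in>supp a. a h * transl h \<xi> g)"
  by (simp add: conv_def supp_def transl_def)

lemma conv_add_left:
  assumes "a \<in> group_alg" "b \<in> group_alg"
  shows "conv (\<lambda>g. a g + b g) \<xi> = (\<lambda>g. conv a \<xi> g + conv b \<xi> g)"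
proof
  fix g
  show "conv (\<lambda>g. a g + b g) \<xi> g = conv a \<xi> g + conv b \<xi> g"
    using Sum_any.distrib[OF finite_supp_mult_left[OF assms(1), of "\<lambda>h. \<xi> (- h + g)"]
        finite_supp_mult_left[OF assms(2), of "\<lambda>h. \<xi> (- h + g)"]]
    by (simp add: conv_eq_Sum_any assms group_alg_add distrib_right)
qed

lemma conv_smult_left:
  assumes "a \<in> group_alg"
  shows "conv (\<lambda>g. c * a g) \<xi> = (\<lambda>g. c * conv a \<xi> g)"
proof
  fix g
  show "conv (\<lambda>g. c * a g) \<xi> g = c * conv a \<xi> g"
    using Sum_any_right_distrib[OF finite_supp_mult_left[OF assms, of "\<lambda>h. \<xi> (- h + g)"], of c]
    by (simp add: conv_eq_Sum_any assms group_alg_smult mult.assoc)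
qed

lemma conv_smult_right: "conv a (\<lambda>g. c * \<xi> g) = (\<lambda>g. c * conv a \<xi> g)"
  by (simp add: conv_def sum_distrib_left mult.left_commute)

lemma conv_zero_left: "conv (\<lambda>_. 0) \<xi> = (\<lambda>_. 0)"
  by (simp add: conv_def)

lemma conv_zero_right: "conv a (\<lambda>_. 0) = (\<lambda>_. 0)"
  by (simp add: conv_def)

lemma conv_delta_left: "conv (delta k 1) \<xi> = transl k \<xi>"
proof -
  have "{h. delta k 1 h \<noteq> 0} = {k}" by (auto simp: delta_def)
  then show ?thesis by (simp add: conv_def transl_def delta_def)
qed

lemma conv_delta_0_right:
  assumes "a \<in> group_alg"
  shows "conv a (delta 0 1) = a"
proof
  fix g
  have "conv a (delta 0 1) g = Sum_any (\<lambda>h. if h = g then a g else 0)"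
    unfolding conv_eq_Sum_any[OF assms]
    by (rule Sum_any.cong) (auto simp: delta_def minus_add_eq_0_iff)
  then show "conv a (delta 0 1) g = a g" by simp
qed


lemma conv_sum_left:
  assumes "finite I" "\<And>i. i \<in> I \<Longrightarrow> f i \<in> group_alg"
  shows "conv (\<lambda>g. \<Sum>i\<in>I. f i g) \<xi> = (\<lambda>g. \<Sum>i\<in>I. conv (f i) \<xi> g)"
  using assms
proof (induction I rule: finite_induct)
  case empty
  then show ?case by (simp add: conv_zero_left)
next
  case (insert i I)
  then show ?case by (simp add: conv_add_left group_alg_sum)
qed

lemma conv_transl_left:
  assumes "x \<in> group_alg"
  shows "conv (transl k x) u = transl k (conv x u)"
proof
  fix g
  have "conv (transl k x) u g = Sum_any (\<lambda>m. x (- k + m) * u (- m + g))"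
    by (simp add: conv_eq_Sum_any group_alg_transl assms) (simp add: transl_def)
  also have "\<dots> = Sum_any (\<lambda>n. x n * u (- n + (- k + g)))"
    by (rule Sum_any.reindex_cong[OF bij_plus[of k]])
       (simp add: fun_eq_iff add.assoc[symmetric] minus_add)
  also have "\<dots> = transl k (conv x u) g"
    by (simp add: conv_eq_Sum_any assms transl_def)
  finally show "conv (transl k x) u g = transl k (conv x u) g" .
qed

lemma conv_assoc:
  assumes "a \<in> group_alg" "x \<in> group_alg"
  shows "conv (conv a x) u = conv a (conv x u)"
proof -
  have fin: "finite (supp a)" using assms(1) by (simp add: group_alg_iff_finite_supp)
  have "conv (conv a x) u = (\<lambda>g. \<Sum>h\<in>supp a. conv (\<lambda>g. a h * transl h x g) u g)"
    unfolding conv_eq_sum_transl[of a x]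
    using fin assms(2) by (intro conv_sum_left) (auto intro: group_alg_smult group_alg_transl)
  also have "\<dots> = (\<lambda>g. \<Sum>h\<in>supp a. a h * transl h (conv x u) g)"
    using assms(2) by (simp add: conv_smult_left group_alg_transl conv_transl_left)
  also have "\<dots> = conv a (conv x u)"
    by (simp add: conv_eq_sum_transl)
  finally show ?thesis .
qed


section \<open>Finitely supported vectors in l2\<close>

text \<open>Sum_any is 0 as soon as infinitely many terms are nonzero, so the following are the
  l2 inner product and squared norm only for finitely supported arguments.\<close>

definition l2_inner :: "('g \<Rightarrow> complex) \<Rightarrow> ('g \<Rightarrow> complex) \<Rightarrow> complex" where
  "l2_inner x y = Sum_any (\<lambda>g. x g * cnj (y g))"

definition l2_sqnorm :: "('g \<Rightarrow> complex) \<Rightarrow> real" where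
  "l2_sqnorm x = Sum_any (\<lambda>g. (cmod (x g))^2)"

lemma l2_inner_eq_sum: "finite A \<Longrightarrow> supp x \<subseteq> A \<Longrightarrow> l2_inner x y = (\<Sum>g\<in>A. x g * cnj (y g))"
  unfolding l2_inner_def by (rule Sum_any.expand_superset) (auto simp: supp_def)

lemma l2_sqnorm_eq_sum: "finite A \<Longrightarrow> supp x \<subseteq> A \<Longrightarrow> l2_sqnorm x = (\<Sum>g\<in>A. (cmod (x g))^2)"
  unfolding l2_sqnorm_def by (rule Sum_any.expand_superset) (auto simp: supp_def)

lemma l2_sqnorm_nonneg: "l2_sqnorm x \<ge> 0"
  unfolding l2_sqnorm_def Sum_any.expand_set by (rule sum_nonneg) simp

lemma l2_inner_self: assumes "x \<in> group_alg" shows "l2_inner x x = complex_of_real (l2_sqnorm x)"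
proof -
  have "l2_inner x x = (\<Sum>g\<in>supp x. x g * cnj (x g))"
    by (rule l2_inner_eq_sum) (use assms in \<open>auto simp: group_alg_iff_finite_supp\<close>)
  also have "\<dots> = (\<Sum>g\<in>supp x. complex_of_real ((cmod (x g))^2))"
    by (rule sum.cong) (simp_all only: complex_norm_square)
  also have "\<dots> = complex_of_real (l2_sqnorm x)"
    using assms by (simp add: l2_sqnorm_eq_sum[of "supp x"] group_alg_iff_finite_supp)
  finally show ?thesis .
qed

lemma l2_inner_add_left:
  assumes "x \<in> group_alg" "y \<in> group_alg"
  shows "l2_inner (\<lambda>g. x g + y g) w = l2_inner x w + l2_inner y w"
  using Sum_any.distrib[OF finite_supp_mult_left[OF assms(1)] finite_supp_mult_left[OF assms(2)]]
  by (simp add: l2_inner_def distrib_right)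

lemma l2_inner_smult_left:
  assumes "x \<in> group_alg"
  shows "l2_inner (\<lambda>g. c * x g) w = c * l2_inner x w"
  using Sum_any_right_distrib[OF finite_supp_mult_left[OF assms], of c]
  by (simp add: l2_inner_def mult.assoc)

lemma l2_inner_sum_left: "finite I \<Longrightarrow> (\<And>i. i \<in> I \<Longrightarrow> f i \<in> group_alg) \<Longrightarrow>
   l2_inner (\<lambda>g. \<Sum>i\<in>I. f i g) w = (\<Sum>i\<in>I. l2_inner (f i) w)"
proof (induction I rule: finite_induct)
  case empty then show ?case by (simp add: l2_inner_def)
next
  case (insert i I)
  have "l2_inner (\<lambda>g. \<Sum>i\<in>insert i I. f i g) w = l2_inner (\<lambda>g. f i g + (\<Sum>i\<in>I. f i g)) w"
    using insert by simp
  also have "\<dots> = l2_inner (f i) w + l2_inner (\<lambda>g. \<Sum>i\<in>I. f i g) w"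
    using insert by (intro l2_inner_add_left group_alg_sum) auto
  finally show ?case using insert by simp
qed

lemma cnj_Sum_any: "cnj (Sum_any f) = Sum_any (\<lambda>g. cnj (f g))"
  unfolding Sum_any.expand_set by (simp add: cnj_sum)

lemma l2_inner_cnj: "l2_inner x y = cnj (l2_inner y x)"
  by (simp add: l2_inner_def cnj_Sum_any mult.commute)

lemma l2_inner_transl: "l2_inner (transl k x) (transl k y) = l2_inner x y"
  unfolding l2_inner_def
  by (rule Sum_any.reindex_cong[where l = "\<lambda>g. k + g", OF bij_plus[of k]])
     (simp add: fun_eq_iff transl_def add.assoc[symmetric])

lemma l2_inner_delta_left: "l2_inner (delta a \<alpha>) y = \<alpha> * cnj (y a)"
proof -
  have "l2_inner (delta a \<alpha>) y = (\<Sum>g\<in>{a}. delta a \<alpha> g * cnj (y g))"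
    by (rule l2_inner_eq_sum) (auto simp: supp_def delta_def)
  then show ?thesis by (simp add: delta_def)
qed

lemma l2_inner_conv_left:
  assumes "x \<in> group_alg" "u \<in> group_alg"
  shows "l2_inner (conv x u) w = (\<Sum>g\<in>supp x. x g * l2_inner (transl g u) w)"
proof -
  have "l2_inner (conv x u) w = (\<Sum>g\<in>supp x. l2_inner (\<lambda>k. x g * transl g u k) w)"
    unfolding conv_eq_sum_transl
  proof (rule l2_inner_sum_left)
    show "finite (supp x)" using assms by (simp add: group_alg_iff_finite_supp)
    show "\<And>i. i \<in> supp x \<Longrightarrow> (\<lambda>k. x i * transl i u k) \<in> group_alg"
      by (rule group_alg_smult, rule group_alg_transl, rule assms(2))
  qed
  also have "\<dots> = (\<Sum>g\<in>supp x. x g * l2_inner (transl g u) w)"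
    using assms by (intro sum.cong refl l2_inner_smult_left group_alg_transl)
  finally show ?thesis .
qed

lemma l2_inner_transl_move: "l2_inner (transl g u) (transl h v) = l2_inner (transl (- h + g) u) v"
proof -
  have "l2_inner (transl g u) (transl h v) =
      l2_inner (transl (- h) (transl g u)) (transl (- h) (transl h v))"
    by (simp add: l2_inner_transl)
  then show ?thesis by (simp add: transl_transl)
qed

lemma l2_inner_conv_conv:
  assumes "x \<in> group_alg" "y \<in> group_alg" "u \<in> group_alg"
  shows "l2_inner (conv x u) (conv y u) =
    (\<Sum>g\<in>supp x. \<Sum>h\<in>supp y. x g * cnj (y h) * l2_inner (transl (- h + g) u) u)"
proof -
  have "l2_inner (conv x u) (conv y u) = (\<Sum>g\<in>supp x. x g * l2_inner (transl g u) (conv y u))"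
    using assms by (simp add: l2_inner_conv_left)
  also have "\<dots> = (\<Sum>g\<in>supp x. \<Sum>h\<in>supp y. x g * cnj (y h) * l2_inner (transl (- h + g) u) u)"
  proof (rule sum.cong[OF refl])
    fix g
    have "l2_inner (transl g u) (conv y u) = cnj (l2_inner (conv y u) (transl g u))"
      by (rule l2_inner_cnj)
    also have "\<dots> = cnj (\<Sum>h\<in>supp y. y h * l2_inner (transl h u) (transl g u))"
      using assms by (simp add: l2_inner_conv_left)
    also have "\<dots> = (\<Sum>h\<in>supp y. cnj (y h) * l2_inner (transl g u) (transl h u))"
      by (simp add: cnj_sum l2_inner_cnj[of "transl g u"])
    also have "\<dots> = (\<Sum>h\<in>supp y. cnj (y h) * l2_inner (transl (- h + g) u) u)"
      by (simp add: l2_inner_transl_move)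
    finally show "x g * l2_inner (transl g u) (conv y u) =
        (\<Sum>h\<in>supp y. x g * cnj (y h) * l2_inner (transl (- h + g) u) u)"
      by (simp add: sum_distrib_left mult.assoc)
  qed
  finally show ?thesis .
qed

lemma l2_inner_conv_adjoint:
  assumes a: "a \<in> group_alg" and x: "x \<in> group_alg" and y: "y \<in> group_alg"
  shows "l2_inner (conv a x) y = l2_inner x (conv (inv_star a) y)"
proof -
  have "l2_inner x (conv (inv_star a) y) = cnj (l2_inner (conv (inv_star a) y) x)"
    by (rule l2_inner_cnj)
  also have "\<dots> = cnj (\<Sum>k\<in>supp (inv_star a). inv_star a k * l2_inner (transl k y) x)"
    using a y by (simp add: l2_inner_conv_left group_alg_inv_star)
  also have "\<dots> = (\<Sum>k\<in>uminus ` supp a. a (- k) * l2_inner x (transl k y))"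
    by (simp only: supp_inv_star) (simp add: cnj_sum inv_star_def l2_inner_cnj[of x])
  also have "\<dots> = (\<Sum>h\<in>supp a. a h * l2_inner x (transl (- h) y))"
    by (subst sum.reindex) (auto simp: inj_on_def)
  also have "\<dots> = (\<Sum>h\<in>supp a. a h * l2_inner (transl h x) y)"
  proof (rule sum.cong[OF refl])
    fix h
    have "l2_inner (transl h x) y = l2_inner (transl (- h) (transl h x)) (transl (- h) y)"
      by (simp add: l2_inner_transl)
    then show "a h * l2_inner x (transl (- h) y) = a h * l2_inner (transl h x) y"
      by (simp add: transl_transl)
  qed
  also have "\<dots> = l2_inner (conv a x) y" using a x by (simp add: l2_inner_conv_left)
  finally show ?thesis by simp
qed

lemma l2_group_alg:
  assumes "x \<in> group_alg"
  shows "x \<in> l2" "l2norm x = sqrt (l2_sqnorm x)"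
proof -
  have f: "finite (supp x)" using assms by (simp add: group_alg_iff_finite_supp)
  have "(\<lambda>g. (cmod (x g))^2) summable_on supp x" using f by simp
  moreover have "(\<lambda>g. (cmod (x g))^2) summable_on supp x \<longleftrightarrow> (\<lambda>g. (cmod (x g))^2) summable_on UNIV"
    by (rule summable_on_cong_neutral) (auto simp: supp_def)
  ultimately show "x \<in> l2" unfolding l2_def by simp
  have "(\<Sum>\<^sub>\<infinity>g. (cmod (x g))^2) = (\<Sum>\<^sub>\<infinity>g\<in>supp x. (cmod (x g))^2)"
    by (rule infsum_cong_neutral) (auto simp: supp_def)
  also have "\<dots> = l2_sqnorm x" using f by (simp add: l2_sqnorm_eq_sum)
  finally show "l2norm x = sqrt (l2_sqnorm x)" by (simp add: l2norm_def)
qed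

lemma l2_inner_Cauchy_Schwarz:
  assumes "x \<in> group_alg" "y \<in> group_alg"
  shows "cmod (l2_inner x y) \<le> sqrt (l2_sqnorm x) * sqrt (l2_sqnorm y)"
proof -
  define A where "A = supp x \<union> supp y"
  have fA: "finite A" using assms by (simp add: A_def group_alg_iff_finite_supp)
  have nx: "l2_sqnorm x = (\<Sum>g\<in>A. (cmod (x g))^2)"
    by (rule l2_sqnorm_eq_sum[OF fA]) (auto simp: A_def)
  have ny: "l2_sqnorm y = (\<Sum>g\<in>A. (cmod (y g))^2)"
    by (rule l2_sqnorm_eq_sum[OF fA]) (auto simp: A_def)
  have "l2_inner x y = (\<Sum>g\<in>A. x g * cnj (y g))"
    by (rule l2_inner_eq_sum[OF fA]) (auto simp: A_def)
  then have "cmod (l2_inner x y) = cmod (\<Sum>g\<in>A. x g * cnj (y g))" by simp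
  also have "\<dots> \<le> (\<Sum>g\<in>A. \<bar>cmod (x g)\<bar> * \<bar>cmod (y g)\<bar>)"
    by (rule order_trans[OF norm_sum]) (simp add: norm_mult)
  also have "\<dots> \<le> L2_set (\<lambda>g. cmod (x g)) A * L2_set (\<lambda>g. cmod (y g)) A"
    by (rule L2_set_mult_ineq)
  also have "\<dots> = sqrt (l2_sqnorm x) * sqrt (l2_sqnorm y)"
    by (simp add: L2_set_def nx ny)
  finally show ?thesis .
qed

lemma l2_norm_triangle:
  assumes "x \<in> group_alg" "y \<in> group_alg"
  shows "sqrt (l2_sqnorm (\<lambda>g. x g + y g)) \<le> sqrt (l2_sqnorm x) + sqrt (l2_sqnorm y)"
proof -
  define A where "A = supp x \<union> supp y"
  have fA: "finite A" using assms by (simp add: A_def group_alg_iff_finite_supp)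
  have nx: "l2_sqnorm x = (\<Sum>g\<in>A. (cmod (x g))^2)"
    by (rule l2_sqnorm_eq_sum[OF fA]) (auto simp: A_def)
  have ny: "l2_sqnorm y = (\<Sum>g\<in>A. (cmod (y g))^2)"
    by (rule l2_sqnorm_eq_sum[OF fA]) (auto simp: A_def)
  have nxy: "l2_sqnorm (\<lambda>g. x g + y g) = (\<Sum>g\<in>A. (cmod (x g + y g))^2)"
    by (rule l2_sqnorm_eq_sum[OF fA]) (auto simp: A_def supp_def)
  have "sqrt (l2_sqnorm (\<lambda>g. x g + y g)) = L2_set (\<lambda>g. cmod (x g + y g)) A"
    by (simp add: nxy L2_set_def)
  also have "\<dots> \<le> L2_set (\<lambda>g. cmod (x g) + cmod (y g)) A"
    by (rule L2_set_mono) (auto simp: norm_triangle_ineq)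
  also have "\<dots> \<le> L2_set (\<lambda>g. cmod (x g)) A + L2_set (\<lambda>g. cmod (y g)) A"
    by (rule L2_set_triangle_ineq)
  also have "\<dots> = sqrt (l2_sqnorm x) + sqrt (l2_sqnorm y)"
    by (simp add: L2_set_def nx ny)
  finally show ?thesis .
qed


lemma l2_sqnorm_smult:
  assumes "x \<in> group_alg"
  shows "l2_sqnorm (\<lambda>g. c * x g) = (cmod c)^2 * l2_sqnorm x"
proof -
  have f: "finite (supp x)" using assms by (simp add: group_alg_iff_finite_supp)
  have "l2_sqnorm (\<lambda>g. c * x g) = (\<Sum>g\<in>supp x. (cmod (c * x g))^2)"
    by (rule l2_sqnorm_eq_sum[OF f]) (auto simp: supp_def)
  also have "\<dots> = (cmod c)^2 * (\<Sum>g\<in>supp x. (cmod (x g))^2)"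
    by (simp add: sum_distrib_left norm_mult power_mult_distrib)
  also have "\<dots> = (cmod c)^2 * l2_sqnorm x" by (simp add: l2_sqnorm_eq_sum[OF f])
  finally show ?thesis .
qed

section \<open>The reduced norm\<close>

lemma weighted_sum_square_le:
  fixes w t :: "'a \<Rightarrow> real"
  assumes "\<And>i. w i \<ge> 0"
  shows "(\<Sum>i\<in>I. w i * t i)^2 \<le> (\<Sum>i\<in>I. w i) * (\<Sum>i\<in>I. w i * (t i)^2)"
proof -
  have "(\<Sum>i\<in>I. sqrt (w i) * (sqrt (w i) * t i))^2
      \<le> (\<Sum>i\<in>I. (sqrt (w i))^2) * (\<Sum>i\<in>I. (sqrt (w i) * t i)^2)"
    by (rule Cauchy_Schwarz_ineq_sum)
  moreover have "sqrt (w i) * (sqrt (w i) * t i) = w i * t i" for i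
    using assms[of i] by (simp add: mult.assoc[symmetric])
  moreover have "(sqrt (w i) * t i)^2 = w i * (t i)^2" for i
    using assms[of i] by (simp add: power_mult_distrib)
  ultimately show ?thesis using assms by simp
qed

lemma cmod_conv_squared_le:
  "(cmod (conv a \<xi> g))^2
    \<le> (\<Sum>h\<in>supp a. cmod (a h)) * (\<Sum>h\<in>supp a. cmod (a h) * (cmod (\<xi> (- h + g)))^2)"
proof -
  have "cmod (conv a \<xi> g) \<le> (\<Sum>h\<in>supp a. cmod (a h) * cmod (\<xi> (- h + g)))"
    unfolding conv_eq_sum_transl transl_def by (rule order_trans[OF norm_sum]) (simp add: norm_mult)
  then have "(cmod (conv a \<xi> g))^2 \<le> (\<Sum>h\<in>supp a. cmod (a h) * cmod (\<xi> (- h + g)))^2"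
    by (simp add: power_mono)
  also have "\<dots> \<le> (\<Sum>h\<in>supp a. cmod (a h)) * (\<Sum>h\<in>supp a. cmod (a h) * (cmod (\<xi> (- h + g)))^2)"
    by (rule weighted_sum_square_le) simp
  finally show ?thesis .
qed

lemma l2norm_conv_le:
  fixes a :: "'g::group_add \<Rightarrow> complex"
  assumes "\<xi> \<in> l2"
  shows "l2norm (conv a \<xi>) \<le> (\<Sum>h\<in>supp a. cmod (a h)) * l2norm \<xi>"
proof -
  define A where "A = (\<Sum>h\<in>supp a. cmod (a h))"
  define S where "S = (\<Sum>\<^sub>\<infinity>g. (cmod (\<xi> g))^2)"
  have A0: "A \<ge> 0" by (simp add: A_def sum_nonneg)
  have S0: "S \<ge> 0" by (simp add: S_def infsum_nonneg)
  have summable: "(\<lambda>g. (cmod (\<xi> g))^2) summable_on UNIV"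
    using assms by (simp add: l2_def)
  have "(\<Sum>\<^sub>\<infinity>g. (cmod (conv a \<xi> g))^2) \<le> A * A * S"
  proof (cases "(\<lambda>g. (cmod (conv a \<xi> g))^2) summable_on UNIV")
    case False
    then show ?thesis using A0 S0 by (simp add: infsum_not_exists)
  next
    case True
    show ?thesis
    proof (rule infsum_le_finite_sums[OF True])
      fix F :: "'g set" assume F: "finite F"
      have "(\<Sum>g\<in>F. (cmod (conv a \<xi> g))^2)
          \<le> (\<Sum>g\<in>F. A * (\<Sum>h\<in>supp a. cmod (a h) * (cmod (\<xi> (- h + g)))^2))"
        unfolding A_def by (rule sum_mono) (rule cmod_conv_squared_le)
      also have "\<dots> = A * (\<Sum>h\<in>supp a. cmod (a h) * (\<Sum>g\<in>F. (cmod (\<xi> (- h + g)))^2))"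
        by (simp add: sum_distrib_left sum.swap[of _ F] mult.assoc)
      also have "\<dots> \<le> A * (\<Sum>h\<in>supp a. cmod (a h) * S)"
      proof (intro mult_left_mono A0 sum_mono mult_left_mono norm_ge_zero)
        fix h
        have "(\<Sum>g\<in>F. (cmod (\<xi> (- h + g)))^2) = (\<Sum>k\<in>(\<lambda>g. - h + g) ` F. (cmod (\<xi> k))^2)"
          by (subst sum.reindex) (auto simp: inj_on_def)
        also have "\<dots> \<le> S" unfolding S_def
          by (rule finite_sum_le_infsum[OF summable]) (use F in auto)
        finally show "(\<Sum>g\<in>F. (cmod (\<xi> (- h + g)))^2) \<le> S" .
      qed
      also have "\<dots> = A * A * S" by (simp add: A_def sum_distrib_right mult.assoc)
      finally show "(\<Sum>g\<in>F. (cmod (conv a \<xi> g))^2) \<le> A * A * S" .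
    qed
  qed
  then have "l2norm (conv a \<xi>) \<le> sqrt (A * A * S)"
    unfolding l2norm_def by (rule real_sqrt_le_mono)
  also have "\<dots> = A * l2norm \<xi>" using A0 S0 by (simp add: l2norm_def S_def real_sqrt_mult)
  finally show ?thesis by (simp add: A_def)
qed

lemma reduced_norm_bdd_above:
  assumes a: "a \<in> group_alg"
  shows "bdd_above {l2norm (conv a \<xi>) |\<xi>. \<xi> \<in> l2 \<and> l2norm \<xi> \<le> 1}"
proof (rule bdd_aboveI)
  fix r assume "r \<in> {l2norm (conv a \<xi>) |\<xi>. \<xi> \<in> l2 \<and> l2norm \<xi> \<le> 1}"
  then obtain \<xi> where r: "r = l2norm (conv a \<xi>)" "\<xi> \<in> l2" "l2norm \<xi> \<le> 1"
    by blast
  have "r \<le> (\<Sum>h\<in>supp a. cmod (a h)) * l2norm \<xi>"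
    using l2norm_conv_le[OF r(2)] r(1) by simp
  also have "\<dots> \<le> (\<Sum>h\<in>supp a. cmod (a h)) * 1"
    by (rule mult_left_mono[OF r(3)]) (simp add: sum_nonneg)
  finally show "r \<le> (\<Sum>h\<in>supp a. cmod (a h))" by simp
qed

lemma reduced_norm_upper:
  assumes a: "a \<in> group_alg" and "\<xi> \<in> l2" "l2norm \<xi> \<le> 1"
  shows "l2norm (conv a \<xi>) \<le> reduced_norm a"
  unfolding reduced_norm_def
  by (rule cSup_upper[OF _ reduced_norm_bdd_above[OF a]]) (use assms in blast)

lemma l2_sqnorm_eq_0_iff:
  assumes "x \<in> group_alg"
  shows "l2_sqnorm x = 0 \<longleftrightarrow> x = (\<lambda>_. 0)"
proof
  assume h: "l2_sqnorm x = 0"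
  have f: "finite (supp x)" using assms by (simp add: group_alg_iff_finite_supp)
  have "\<forall>g\<in>supp x. (cmod (x g))^2 = 0"
    using h by (subst (asm) l2_sqnorm_eq_sum[OF f]) (auto simp: sum_nonneg_eq_0_iff[OF f])
  then show "x = (\<lambda>_. 0)" by (auto simp: supp_def fun_eq_iff)
qed (simp add: l2_sqnorm_def)

lemma reduced_norm_nonneg:
  assumes a: "a \<in> group_alg"
  shows "0 \<le> reduced_norm a"
proof -
  have "l2norm (conv a (\<lambda>_. 0)) \<le> reduced_norm a"
    by (rule reduced_norm_upper[OF a]) (simp_all add: l2_group_alg l2_sqnorm_def)
  moreover have "l2norm (conv a (\<lambda>_. 0)) = 0" by (simp add: conv_def l2norm_def)
  ultimately show ?thesis by simp
qed

lemma l2_norm_conv_le_reduced_norm: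
  assumes a: "a \<in> group_alg" and x: "\<xi> \<in> group_alg"
  shows "sqrt (l2_sqnorm (conv a \<xi>)) \<le> reduced_norm a * sqrt (l2_sqnorm \<xi>)"
proof (cases "l2_sqnorm \<xi> = 0")
  case True
  then have "\<xi> = (\<lambda>_. 0)" using l2_sqnorm_eq_0_iff[OF x] by simp
  then show ?thesis by (simp add: conv_def l2_sqnorm_def)
next
  case False
  define n where "n = sqrt (l2_sqnorm \<xi>)"
  have n0: "n > 0" using False l2_sqnorm_nonneg[of \<xi>] by (simp add: n_def)
  define \<eta> where "\<eta> = (\<lambda>g. complex_of_real (1 / n) * \<xi> g)"
  have e: "\<eta> \<in> group_alg" unfolding \<eta>_def by (rule group_alg_smult[OF x])
  have "l2_sqnorm \<eta> = (cmod (complex_of_real (1/n)))^2 * l2_sqnorm \<xi>"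
    unfolding \<eta>_def by (rule l2_sqnorm_smult[OF x])
  also have "\<dots> = (1/n)^2 * l2_sqnorm \<xi>" by (simp only: norm_of_real) (use n0 in simp)
  also have "\<dots> = 1" using n0 l2_sqnorm_nonneg[of \<xi>] by (simp add: n_def power_divide)
  finally have ne: "l2_sqnorm \<eta> = 1" .
  have "l2norm (conv a \<eta>) \<le> reduced_norm a"
    by (rule reduced_norm_upper[OF a]) (simp_all add: l2_group_alg e ne)
  moreover have "l2norm (conv a \<eta>) = sqrt (l2_sqnorm (conv a \<xi>)) / n"
  proof -
    have ce: "conv a \<eta> = (\<lambda>g. complex_of_real (1/n) * conv a \<xi> g)"
      unfolding \<eta>_def by (rule conv_smult_right)
    have "l2_sqnorm (conv a \<eta>) = (cmod (complex_of_real (1/n)))^2 * l2_sqnorm (conv a \<xi>)"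
      by (simp only: ce l2_sqnorm_smult[OF group_alg_conv[OF a x]])
    then show ?thesis using n0 group_alg_conv[OF a e]
      by (simp add: l2_group_alg real_sqrt_mult real_sqrt_divide norm_divide)
  qed
  ultimately have "sqrt (l2_sqnorm (conv a \<xi>)) / n \<le> reduced_norm a" by simp
  then show ?thesis using n0 by (simp add: n_def divide_le_eq mult.commute)
qed

lemma l2_sqnorm_conv_le:
  assumes "a \<in> group_alg" "\<xi> \<in> group_alg"
  shows "l2_sqnorm (conv a \<xi>) \<le> (reduced_norm a)^2 * l2_sqnorm \<xi>"
proof -
  have "(sqrt (l2_sqnorm (conv a \<xi>)))^2 \<le> (reduced_norm a * sqrt (l2_sqnorm \<xi>))^2"
    using l2_norm_conv_le_reduced_norm[OF assms] by (rule power_mono) (simp add: l2_sqnorm_nonneg)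
  then show ?thesis
    by (simp add: l2_sqnorm_nonneg power_mult_distrib)
qed


lemma card_window_ratio_tendsto:
  fixes j :: int
  shows "(\<lambda>N. real (card {m. m < N \<and> 0 \<le> j + int m \<and> j + int m < int N}) / real N) \<longlonglongrightarrow> 1"
proof -
  define a where "a = nat \<bar>j\<bar>"
  let ?c = "\<lambda>N. real (card {m. m < N \<and> 0 \<le> j + int m \<and> j + int m < int N})"
  have lower: "real N - 2 * real a \<le> ?c N" for N
  proof -
    have "{a..<N - a} \<subseteq> {m. m < N \<and> 0 \<le> j + int m \<and> j + int m < int N}"
      by (auto simp: a_def)
    from card_mono[OF _ this] show ?thesis by simp
  qed
  have upper: "?c N \<le> real N" for N
  proof -
    have "{m. m < N \<and> 0 \<le> j + int m \<and> j + int m < int N} \<subseteq> {..<N}" by auto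
    from card_mono[OF _ this] show ?thesis by simp
  qed
  show ?thesis
  proof (rule tendsto_sandwich[where f = "\<lambda>N. (real N - 2 * real a) / real N" and h = "\<lambda>N. 1"])
    show "(\<lambda>N. (real N - 2 * real a) / real N) \<longlonglongrightarrow> 1" by real_asymp
    show "\<forall>\<^sub>F N in sequentially. (real N - 2 * real a) / real N \<le> ?c N / real N"
      by (intro always_eventually allI divide_right_mono lower) simp
    show "\<forall>\<^sub>F N in sequentially. ?c N / real N \<le> 1"
      using upper by (intro eventually_sequentiallyI[of 1]) (simp add: divide_le_eq_1)
  qed simp
qed

text \<open>Re \<omega> \<le> 0 is what keeps the new norm of \<delta>_0 + \<delta>_z at \<surd>2 (ind_sqnorm_add_transl_z); that the
  half circle is infinite is what makes the norm faithful (exists_ind_sqnorm_pos).\<close>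

definition half_circle :: "complex set" where
  "half_circle = {\<omega>. cmod \<omega> = 1 \<and> Re \<omega> \<le> 0}"

lemma half_circle_norm: "\<omega> \<in> half_circle \<Longrightarrow> cmod \<omega> = 1"
  by (simp add: half_circle_def)

lemma infinite_half_circle: "infinite half_circle"
proof -
  define f where "f = (\<lambda>t::real. Complex (- sqrt (1 - t^2)) t)"
  have inj: "inj_on f {0..1}" by (auto simp: inj_on_def f_def)
  have sub: "f ` {0..1} \<subseteq> half_circle"
  proof
    fix w assume "w \<in> f ` {0..1}"
    then obtain t where t: "t \<in> {0..1}" "w = f t" by blast
    from t(1) have t01: "0 \<le> t" "t \<le> 1" by auto
    have "t^2 \<le> 1" by (rule power_le_one[OF t01])
    then have s: "(sqrt (1 - t^2))^2 = 1 - t^2" by (intro real_sqrt_pow2) linarith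
    have "cmod w = 1" by (simp add: t(2) f_def cmod_def s)
    moreover have "Re w \<le> 0"
    proof -
      have "0 \<le> sqrt (1 - t^2)"
        by (rule real_sqrt_ge_zero) (use \<open>t^2 \<le> 1\<close> in linarith)
      moreover have "Re w = - sqrt (1 - t^2)" by (simp add: t(2) f_def)
      ultimately show ?thesis by simp
    qed
    ultimately show "w \<in> half_circle" by (simp add: half_circle_def)
  qed
  have "infinite (f ` {0..1})" using inj by (simp add: finite_image_iff)
  then show ?thesis using sub finite_subset by blast
qed

lemma finite_zeros_powi_sum:
  fixes c :: "'i \<Rightarrow> 'a::field" and e :: "'i \<Rightarrow> int"
  assumes "finite I" and "(\<Sum>i\<in>{i\<in>I. e i = 0}. c i) \<noteq> 0"
  shows "finite {x. x \<noteq> 0 \<and> (\<Sum>i\<in>I. c i * x powi e i) = 0}"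
proof -
  define M where "M = Max (insert 0 ((\<lambda>i. nat \<bar>e i\<bar>) ` I))"
  have M: "\<bar>e i\<bar> \<le> int M" if "i \<in> I" for i
  proof -
    have "nat \<bar>e i\<bar> \<le> M" using assms(1) that by (simp add: M_def)
    then show ?thesis by linarith
  qed
  define P where "P = (\<Sum>i\<in>I. monom (c i) (nat (int M + e i)))"
  have "poly P x = x ^ M * (\<Sum>i\<in>I. c i * x powi e i)" if "x \<noteq> 0" for x
  proof -
    have "x ^ nat (int M + e i) = x ^ M * x powi e i" if "i \<in> I" for i
      using M[OF that] \<open>x \<noteq> 0\<close> by (simp add: power_int_add flip: power_int_of_nat)
    then show ?thesis
      by (simp add: P_def poly_sum poly_monom sum_distrib_left mult_ac)
  qed
  then have "{x. x \<noteq> 0 \<and> (\<Sum>i\<in>I. c i * x powi e i) = 0} \<subseteq> {x. poly P x = 0}"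
    by auto
  moreover have "coeff P M = (\<Sum>i\<in>{i\<in>I. e i = 0}. c i)"
  proof -
    have "coeff P M = (\<Sum>i\<in>I. if nat (int M + e i) = M then c i else 0)"
      by (simp add: P_def coeff_sum coeff_monom)
    also have "\<dots> = (\<Sum>i\<in>I. if e i = 0 then c i else 0)"
      by (rule sum.cong) (use M in \<open>auto simp: nat_eq_iff\<close>)
    finally show ?thesis
      by (simp add: sum.inter_filter[OF assms(1)])
  qed
  then have "P \<noteq> 0" using assms(2) by auto
  ultimately show ?thesis
    using poly_roots_finite finite_subset by blast
qed

lemma sum_if_int_eq_shift:
  fixes \<omega> :: complex
  assumes "cmod \<omega> = 1"
  shows "(\<Sum>n<N. if int n = j + int m then cnj \<omega> ^ m * \<omega> ^ n else 0) =
    (if 0 \<le> j + int m \<and> j + int m < int N then \<omega> powi j else 0)"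
proof (cases "0 \<le> j + int m")
  case True
  have "\<omega> \<noteq> 0" using assms by auto
  then have "cnj \<omega> ^ m * \<omega> ^ nat (j + int m) = cnj \<omega> ^ m * (\<omega> powi j * \<omega> ^ m)"
    using True by (simp add: power_int_add flip: power_int_of_nat)
  also have "\<dots> = (cnj \<omega> * \<omega>) ^ m * \<omega> powi j"
    by (simp add: power_mult_distrib)
  also have "\<dots> = \<omega> powi j"
    using assms by (simp add: mult.commute complex_norm_square[symmetric])
  moreover have "int n = j + int m \<longleftrightarrow> n = nat (j + int m)" for n
    using True by auto
  ultimately show ?thesis
    using True by (simp add: sum.delta nat_less_iff)
next
  case False
  then show ?thesis by (auto intro!: sum.neutral)
qed

section \<open>The subgroup generated by a central element of infinite order\<close>

locale central_infinite_order =
  fixes z :: "'g::group_add"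
  assumes z_central: "central z" and z_infinite_order: "infinite_order z"
begin

definition nat_mult :: "nat \<Rightarrow> 'g" where "nat_mult n = (((+) z) ^^ n) 0"

lemma nat_mult_0[simp]: "nat_mult 0 = 0" by (simp add: nat_mult_def)
lemma nat_mult_Suc: "nat_mult (Suc n) = z + nat_mult n" by (simp add: nat_mult_def)

lemma z_commute: "z + g = g + z" using z_central unfolding central_def by blast

lemma nat_mult_commute: "nat_mult n + g = g + nat_mult n"
proof (induction n)
  case 0 then show ?case by simp
next
  case (Suc n)
  have "nat_mult (Suc n) + g = z + (nat_mult n + g)" by (simp add: nat_mult_Suc add.assoc)
  also have "\<dots> = (z + g) + nat_mult n" by (simp only: Suc add.assoc)
  also have "\<dots> = g + nat_mult (Suc n)" by (simp only: z_commute[of g] nat_mult_Suc add.assoc)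
  finally show ?case .
qed

lemma nat_mult_neq_0: "n > 0 \<Longrightarrow> nat_mult n \<noteq> 0"
  using z_infinite_order unfolding infinite_order_def nat_mult_def by blast

definition int_mult :: "int \<Rightarrow> 'g" where
  "int_mult j = (if 0 \<le> j then nat_mult (nat j) else - nat_mult (nat (-j)))"

lemma int_mult_0[simp]: "int_mult 0 = 0" by (simp add: int_mult_def)

lemma int_mult_succ: "int_mult (j + 1) = z + int_mult j"
proof (cases "0 \<le> j")
  case True
  then have "nat (j+1) = Suc (nat j)" by simp
  then show ?thesis using True by (simp add: int_mult_def nat_mult_Suc)
next
  case False
  show ?thesis
  proof (cases "j = -1")
    case True then show ?thesis by (simp add: int_mult_def nat_mult_Suc)
  next
    case False2: False
    then have j: "j + 1 < 0" using False by simp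
    define m where "m = nat (-j - 1)"
    have e1: "nat (- j) = Suc m" using j by (simp add: m_def)
    have e2: "nat (-(j+1)) = m" by (simp add: m_def)
    have "z + int_mult j = z + - (z + nat_mult m)"
      using False by (simp add: int_mult_def e1 nat_mult_Suc)
    also have "\<dots> = z + - (nat_mult m + z)" by (simp only: nat_mult_commute[of m z])
    also have "\<dots> = - nat_mult m" by (simp only: minus_add add_minus_cancel)
    finally show ?thesis using j by (simp add: int_mult_def m_def)
  qed
qed

lemma int_mult_pred: "int_mult (j - 1) = - z + int_mult j"
proof -
  have "int_mult j = z + int_mult (j - 1)" using int_mult_succ[of "j - 1"] by simp
  then show ?thesis by (metis minus_add_cancel)
qed

lemma int_mult_add: "int_mult (i + j) = int_mult i + int_mult j"
proof (induction i rule: int_induct[where k=0])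
  case base then show ?case by simp
next
  case (step1 i)
  have "int_mult (i + 1 + j) = int_mult ((i + j) + 1)" by (simp add: ac_simps)
  also have "\<dots> = z + int_mult (i + j)" by (rule int_mult_succ)
  also have "\<dots> = int_mult (i + 1) + int_mult j" by (simp add: step1 int_mult_succ add.assoc)
  finally show ?case .
next
  case (step2 i)
  have "int_mult (i - 1 + j) = int_mult ((i + j) - 1)" by (rule arg_cong[where f=int_mult]) simp
  also have "\<dots> = - z + int_mult (i + j)" by (rule int_mult_pred)
  also have "\<dots> = int_mult (i - 1) + int_mult j" by (simp add: step2 int_mult_pred add.assoc)
  finally show ?case .
qed

lemma int_mult_1[simp]: "int_mult 1 = z" by (simp add: int_mult_def nat_mult_Suc)

lemma int_mult_minus: "int_mult (- j) = - int_mult j"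
  using int_mult_add[of "-j" j] by (simp add: eq_neg_iff_add_eq_0)

lemma int_mult_eq_0_iff: "int_mult j = 0 \<longleftrightarrow> j = 0"
  using nat_mult_neq_0[of "nat j"] nat_mult_neq_0[of "nat (- j)"]
  by (cases j "0 :: int" rule: linorder_cases) (auto simp: int_mult_def)

lemma int_mult_eq_iff: "int_mult i = int_mult j \<longleftrightarrow> i = j"
proof
  assume "int_mult i = int_mult j"
  have "int_mult (i + - j) = int_mult i + - int_mult j" by (simp only: int_mult_add int_mult_minus)
  then have "int_mult (i + - j) = 0" using \<open>int_mult i = int_mult j\<close> by simp
  then show "i = j" by (simp only: int_mult_eq_0_iff)
qed simp

lemma z_neq_0: "z \<noteq> 0"
  using int_mult_eq_iff[of 1 0] by simp

lemma z_plus_z_neq_0: "z + z \<noteq> 0"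
  using int_mult_eq_iff[of 2 0] int_mult_add[of 1 1] by simp

lemma z_plus_z_neq_z: "z + z \<noteq> z"
proof
  assume "z + z = z"
  then have "z + z = z + 0" by simp
  then show False using z_neq_0 by (simp only: add_left_cancel)
qed

lemma inj_int_mult: "inj int_mult" by (simp add: inj_def int_mult_eq_iff)

end


section \<open>Representations induced from characters of the central subgroup\<close>

context central_infinite_order
begin

definition zchar :: "complex \<Rightarrow> 'g \<Rightarrow> complex" where
  "zchar \<omega> k = (if k \<in> range int_mult then \<omega> powi (inv int_mult k) else 0)"

lemma zchar_int_mult: "zchar \<omega> (int_mult j) = \<omega> powi j"
  by (simp add: zchar_def inv_f_f[OF inj_int_mult])

lemma zchar_outside: "k \<notin> range int_mult \<Longrightarrow> zchar \<omega> k = 0"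
  by (simp add: zchar_def)

lemma zchar_shift:
  assumes "\<omega> \<noteq> 0"
  shows "zchar \<omega> (int_mult i + k) = \<omega> powi i * zchar \<omega> k"
proof (cases "k \<in> range int_mult")
  case True
  then obtain j where "k = int_mult j" by blast
  then show ?thesis using assms by (simp add: zchar_int_mult int_mult_add[symmetric] power_int_add)
next
  case False
  have "int_mult i + k \<notin> range int_mult"
  proof
    assume "int_mult i + k \<in> range int_mult"
    then obtain m where "int_mult i + k = int_mult m" by blast
    then have "k = - int_mult i + int_mult m" by (metis minus_add_cancel)
    then have "k = int_mult (- i + m)" by (simp only: int_mult_add int_mult_minus)
    then show False using False by blast
  qed
  then show ?thesis using False by (simp add: zchar_outside)
qed

text \<open>An approximate eigenvector, with eigenvalue \<omega>, of translation by z.\<close>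

definition eigvec :: "complex \<Rightarrow> nat \<Rightarrow> 'g \<Rightarrow> complex" where
  "eigvec \<omega> N = (\<lambda>g. \<Sum>n<N. delta (int_mult (int n)) (cnj \<omega> ^ n) g)"

lemma group_alg_eigvec: "eigvec \<omega> N \<in> group_alg"
  unfolding eigvec_def by (rule group_alg_sum) (auto intro: group_alg_delta)

definition eigvec_coeff :: "complex \<Rightarrow> nat \<Rightarrow> 'g \<Rightarrow> complex" where
  "eigvec_coeff \<omega> N k = l2_inner (transl k (eigvec \<omega> N)) (eigvec \<omega> N)"

lemma eigvec_coeff_eq:
  "eigvec_coeff \<omega> N k =
    (\<Sum>m<N. \<Sum>n<N. if k + int_mult (int m) = int_mult (int n) then cnj \<omega> ^ m * \<omega> ^ n else 0)"
proof -
  have "transl k (eigvec \<omega> N) = (\<lambda>g. \<Sum>m<N. delta (k + int_mult (int m)) (cnj \<omega> ^ m) g)"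
    using fun_cong[OF transl_delta[of k]] by (simp add: eigvec_def transl_def)
  then have "eigvec_coeff \<omega> N k =
      (\<Sum>m<N. l2_inner (delta (k + int_mult (int m)) (cnj \<omega> ^ m)) (eigvec \<omega> N))"
    unfolding eigvec_coeff_def by (simp add: l2_inner_sum_left group_alg_delta)
  also have "\<dots> = (\<Sum>m<N. cnj \<omega> ^ m * cnj (eigvec \<omega> N (k + int_mult (int m))))"
    by (simp add: l2_inner_delta_left)
  finally show ?thesis
    by (simp add: eigvec_def delta_def cnj_sum sum_distrib_left if_distrib[of cnj]
        if_distrib[of "(*) _"] cong: if_cong)
qed

lemma eigvec_coeff_int_mult:
  assumes "cmod \<omega> = 1"
  shows "eigvec_coeff \<omega> N (int_mult j) =
    \<omega> powi j * of_nat (card {m. m < N \<and> 0 \<le> j + int m \<and> j + int m < int N})"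
proof -
  have "eigvec_coeff \<omega> N (int_mult j) =
      (\<Sum>m<N. \<Sum>n<N. if int n = j + int m then cnj \<omega> ^ m * \<omega> ^ n else 0)"
    by (simp add: eigvec_coeff_eq int_mult_add[symmetric] int_mult_eq_iff eq_commute[of "j + _"])
  also have "\<dots> = (\<Sum>m<N. if 0 \<le> j + int m \<and> j + int m < int N then \<omega> powi j else 0)"
    using assms by (simp add: sum_if_int_eq_shift)
  also have "\<dots> = (\<Sum>m\<in>{m. m < N \<and> 0 \<le> j + int m \<and> j + int m < int N}. \<omega> powi j)"
    by (simp add: sum.inter_filter[symmetric])
  also have "\<dots> = \<omega> powi j * of_nat (card {m. m < N \<and> 0 \<le> j + int m \<and> j + int m < int N})"
    by (simp add: mult.commute)
  finally show ?thesis .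
qed

lemma eigvec_coeff_outside:
  assumes "k \<notin> range int_mult"
  shows "eigvec_coeff \<omega> N k = 0"
proof -
  have "k + int_mult (int m) \<noteq> int_mult (int n)" for m n
  proof
    assume "k + int_mult (int m) = int_mult (int n)"
    then have "k + int_mult (int m) + - int_mult (int m) = int_mult (int n) + - int_mult (int m)"
      by simp
    then have "k = int_mult (int n) + - int_mult (int m)" by (simp add: add.assoc)
    then have "k = int_mult (int n + - int m)" by (simp only: int_mult_add int_mult_minus)
    then show False using assms by blast
  qed
  then show ?thesis by (simp add: eigvec_coeff_eq)
qed

lemma eigvec_coeff_tendsto:
  assumes w: "cmod \<omega> = 1"
  shows "(\<lambda>N. eigvec_coeff \<omega> N k / of_nat N) \<longlonglongrightarrow> zchar \<omega> k"
proof (cases "k \<in> range int_mult")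
  case True
  then obtain j where k: "k = int_mult j" by blast
  have "(\<lambda>N. \<omega> powi j *
      complex_of_real (real (card {m. m < N \<and> 0 \<le> j + int m \<and> j + int m < int N}) / real N))
      \<longlonglongrightarrow> \<omega> powi j * complex_of_real 1"
    by (intro tendsto_mult tendsto_const tendsto_of_real card_window_ratio_tendsto)
  then show ?thesis using w by (simp add: k eigvec_coeff_int_mult zchar_int_mult)
next
  case False
  then show ?thesis by (simp add: eigvec_coeff_outside zchar_outside)
qed

text \<open>The inner product of the representation induced from the character j z \<mapsto> \<omega>^j; zchar \<omega> is
  the corresponding positive definite function on \<Gamma>. Its positivity, the Cauchy-Schwarz inequality
  and the bound by the reduced norm are inherited in the limit (avg_inner_tendsto) from the finite
  averages avg_inner.\<close>

definition ind_inner :: "complex \<Rightarrow> ('g \<Rightarrow> complex) \<Rightarrow> ('g \<Rightarrow> complex) \<Rightarrow> complex" where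
  "ind_inner \<omega> x y = (\<Sum>g\<in>supp x. \<Sum>h\<in>supp y. x g * cnj (y h) * zchar \<omega> (- h + g))"

definition ind_sqnorm :: "complex \<Rightarrow> ('g \<Rightarrow> complex) \<Rightarrow> real" where
  "ind_sqnorm \<omega> x = Re (ind_inner \<omega> x x)"

definition avg_inner :: "complex \<Rightarrow> nat \<Rightarrow> ('g \<Rightarrow> complex) \<Rightarrow> ('g \<Rightarrow> complex) \<Rightarrow> complex" where
  "avg_inner \<omega> N x y = l2_inner (conv x (eigvec \<omega> N)) (conv y (eigvec \<omega> N)) / of_nat N"

definition avg_sqnorm :: "complex \<Rightarrow> nat \<Rightarrow> ('g \<Rightarrow> complex) \<Rightarrow> real" where
  "avg_sqnorm \<omega> N x = l2_sqnorm (conv x (eigvec \<omega> N)) / real N"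

lemma avg_inner_self: "x \<in> group_alg \<Longrightarrow> avg_inner \<omega> N x x = of_real (avg_sqnorm \<omega> N x)"
  by (simp add: avg_inner_def avg_sqnorm_def l2_inner_self group_alg_conv group_alg_eigvec)

lemma avg_sqnorm_nonneg: "avg_sqnorm \<omega> N x \<ge> 0"
  by (simp add: avg_sqnorm_def l2_sqnorm_nonneg)

lemma avg_sqnorm_smult:
  "x \<in> group_alg \<Longrightarrow> avg_sqnorm \<omega> N (\<lambda>g. c * x g) = (cmod c)^2 * avg_sqnorm \<omega> N x"
  by (simp add: avg_sqnorm_def conv_smult_left l2_sqnorm_smult group_alg_conv group_alg_eigvec)

lemma avg_inner_cnj: "avg_inner \<omega> N x y = cnj (avg_inner \<omega> N y x)"
  by (simp add: avg_inner_def l2_inner_cnj[of "conv x _"])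

lemma avg_inner_add_left:
  assumes "x \<in> group_alg" "y \<in> group_alg"
  shows "avg_inner \<omega> N (\<lambda>g. x g + y g) v = avg_inner \<omega> N x v + avg_inner \<omega> N y v"
  by (simp add: avg_inner_def conv_add_left[OF assms] l2_inner_add_left group_alg_conv assms
      group_alg_eigvec add_divide_distrib)

lemma avg_inner_smult_left:
  assumes "x \<in> group_alg"
  shows "avg_inner \<omega> N (\<lambda>g. c * x g) v = c * avg_inner \<omega> N x v"
  by (simp add: avg_inner_def conv_smult_left[OF assms] l2_inner_smult_left group_alg_conv assms
      group_alg_eigvec)

lemma avg_inner_conv_adjoint:
  assumes "a \<in> group_alg" "x \<in> group_alg" "y \<in> group_alg"
  shows "avg_inner \<omega> N (conv a x) y = avg_inner \<omega> N x (conv (inv_star a) y)"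
  using assms
  by (simp add: avg_inner_def conv_assoc group_alg_inv_star l2_inner_conv_adjoint group_alg_conv
      group_alg_eigvec)

lemma avg_inner_Cauchy_Schwarz:
  assumes "x \<in> group_alg" "y \<in> group_alg"
  shows "cmod (avg_inner \<omega> N x y) \<le> sqrt (avg_sqnorm \<omega> N x) * sqrt (avg_sqnorm \<omega> N y)"
proof -
  let ?x = "conv x (eigvec \<omega> N)" and ?y = "conv y (eigvec \<omega> N)"
  have "cmod (l2_inner ?x ?y) \<le> sqrt (l2_sqnorm ?x) * sqrt (l2_sqnorm ?y)"
    using assms by (intro l2_inner_Cauchy_Schwarz group_alg_conv group_alg_eigvec)
  then have "cmod (l2_inner ?x ?y) / real N \<le> sqrt (l2_sqnorm ?x) * sqrt (l2_sqnorm ?y) / real N"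
    by (rule divide_right_mono) simp
  then show ?thesis
    by (simp add: avg_inner_def avg_sqnorm_def norm_divide real_sqrt_divide)
qed

lemma avg_norm_triangle:
  assumes "x \<in> group_alg" "y \<in> group_alg"
  shows "sqrt (avg_sqnorm \<omega> N (\<lambda>g. x g + y g)) \<le> sqrt (avg_sqnorm \<omega> N x) + sqrt (avg_sqnorm \<omega> N y)"
proof -
  let ?x = "conv x (eigvec \<omega> N)" and ?y = "conv y (eigvec \<omega> N)"
  have "sqrt (l2_sqnorm (\<lambda>g. ?x g + ?y g)) \<le> sqrt (l2_sqnorm ?x) + sqrt (l2_sqnorm ?y)"
    using assms by (intro l2_norm_triangle group_alg_conv group_alg_eigvec)
  then have "sqrt (l2_sqnorm (\<lambda>g. ?x g + ?y g)) / sqrt (real N)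
      \<le> (sqrt (l2_sqnorm ?x) + sqrt (l2_sqnorm ?y)) / sqrt (real N)"
    by (rule divide_right_mono) simp
  then show ?thesis
    by (simp add: avg_sqnorm_def conv_add_left[OF assms] real_sqrt_divide add_divide_distrib)
qed

lemma avg_sqnorm_conv_le:
  assumes "a \<in> group_alg" "v \<in> group_alg"
  shows "avg_sqnorm \<omega> N (conv a v) \<le> (reduced_norm a)^2 * avg_sqnorm \<omega> N v"
proof -
  have "l2_sqnorm (conv a (conv v (eigvec \<omega> N)))
      \<le> (reduced_norm a)^2 * l2_sqnorm (conv v (eigvec \<omega> N))"
    using assms by (intro l2_sqnorm_conv_le group_alg_conv group_alg_eigvec)
  then show ?thesis
    using assms by (simp add: avg_sqnorm_def conv_assoc divide_right_mono)
qed

lemma avg_inner_tendsto: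
  assumes "cmod \<omega> = 1" "x \<in> group_alg" "y \<in> group_alg"
  shows "(\<lambda>N. avg_inner \<omega> N x y) \<longlonglongrightarrow> ind_inner \<omega> x y"
proof -
  have eq: "avg_inner \<omega> N x y =
      (\<Sum>g\<in>supp x. \<Sum>h\<in>supp y. x g * cnj (y h) * (eigvec_coeff \<omega> N (- h + g) / of_nat N))" for N
    using assms(2,3)
    by (simp add: avg_inner_def l2_inner_conv_conv group_alg_eigvec eigvec_coeff_def
        sum_divide_distrib)
  show ?thesis
    unfolding eq ind_inner_def
    by (intro tendsto_sum tendsto_mult tendsto_const eigvec_coeff_tendsto assms(1))
qed

lemma avg_sqnorm_tendsto:
  assumes "cmod \<omega> = 1" "x \<in> group_alg"
  shows "(\<lambda>N. avg_sqnorm \<omega> N x) \<longlonglongrightarrow> ind_sqnorm \<omega> x"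
  using tendsto_Re[OF avg_inner_tendsto[OF assms(1,2,2)]]
  by (simp add: avg_inner_self[OF assms(2)] ind_sqnorm_def)

lemma ind_inner_self:
  assumes w: "cmod \<omega> = 1" and x: "x \<in> group_alg"
  shows "ind_inner \<omega> x x = of_real (ind_sqnorm \<omega> x)" "ind_sqnorm \<omega> x \<ge> 0"
proof -
  have "(\<lambda>N. Im (avg_inner \<omega> N x x)) \<longlonglongrightarrow> Im (ind_inner \<omega> x x)"
    by (rule tendsto_Im[OF avg_inner_tendsto[OF w x x]])
  then have "Im (ind_inner \<omega> x x) = 0"
    by (simp add: avg_inner_self[OF x] LIMSEQ_const_iff)
  then show "ind_inner \<omega> x x = of_real (ind_sqnorm \<omega> x)"
    by (simp add: complex_eq_iff ind_sqnorm_def)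
  show "ind_sqnorm \<omega> x \<ge> 0"
    by (rule LIMSEQ_le_const[OF avg_sqnorm_tendsto[OF w x]]) (simp add: avg_sqnorm_nonneg)
qed

lemma ind_inner_Cauchy_Schwarz:
  assumes w: "cmod \<omega> = 1" and x: "x \<in> group_alg" and y: "y \<in> group_alg"
  shows "cmod (ind_inner \<omega> x y) \<le> sqrt (ind_sqnorm \<omega> x) * sqrt (ind_sqnorm \<omega> y)"
proof (rule tendsto_le[OF trivial_limit_sequentially])
  show "(\<lambda>N. sqrt (avg_sqnorm \<omega> N x) * sqrt (avg_sqnorm \<omega> N y))
      \<longlonglongrightarrow> sqrt (ind_sqnorm \<omega> x) * sqrt (ind_sqnorm \<omega> y)"
    by (intro tendsto_mult tendsto_real_sqrt avg_sqnorm_tendsto w x y)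
  show "(\<lambda>N. cmod (avg_inner \<omega> N x y)) \<longlonglongrightarrow> cmod (ind_inner \<omega> x y)"
    by (intro tendsto_norm avg_inner_tendsto w x y)
qed (intro always_eventually allI avg_inner_Cauchy_Schwarz x y)

lemma sqrt_ind_sqnorm_triangle:
  assumes w: "cmod \<omega> = 1" and x: "x \<in> group_alg" and y: "y \<in> group_alg"
  shows "sqrt (ind_sqnorm \<omega> (\<lambda>g. x g + y g)) \<le> sqrt (ind_sqnorm \<omega> x) + sqrt (ind_sqnorm \<omega> y)"
proof (rule tendsto_le[OF trivial_limit_sequentially])
  show "(\<lambda>N. sqrt (avg_sqnorm \<omega> N x) + sqrt (avg_sqnorm \<omega> N y))
      \<longlonglongrightarrow> sqrt (ind_sqnorm \<omega> x) + sqrt (ind_sqnorm \<omega> y)"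
    by (intro tendsto_add tendsto_real_sqrt avg_sqnorm_tendsto w x y)
  show "(\<lambda>N. sqrt (avg_sqnorm \<omega> N (\<lambda>g. x g + y g))) \<longlonglongrightarrow> sqrt (ind_sqnorm \<omega> (\<lambda>g. x g + y g))"
    by (intro tendsto_real_sqrt avg_sqnorm_tendsto w group_alg_add x y)
qed (intro always_eventually allI avg_norm_triangle x y)

lemma ind_inner_add_left:
  assumes w: "cmod \<omega> = 1" and x: "x \<in> group_alg" and y: "y \<in> group_alg" and v: "v \<in> group_alg"
  shows "ind_inner \<omega> (\<lambda>g. x g + y g) v = ind_inner \<omega> x v + ind_inner \<omega> y v"
  using avg_inner_tendsto[OF w group_alg_add[OF x y] v]
    tendsto_add[OF avg_inner_tendsto[OF w x v] avg_inner_tendsto[OF w y v]]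
  by (simp add: avg_inner_add_left[OF x y] LIMSEQ_unique)

lemma ind_inner_smult_left:
  assumes w: "cmod \<omega> = 1" and x: "x \<in> group_alg" and v: "v \<in> group_alg"
  shows "ind_inner \<omega> (\<lambda>g. c * x g) v = c * ind_inner \<omega> x v"
  using avg_inner_tendsto[OF w group_alg_smult[OF x, of c] v]
    tendsto_mult[OF tendsto_const[of c] avg_inner_tendsto[OF w x v]]
  by (simp add: avg_inner_smult_left[OF x] LIMSEQ_unique)

lemma ind_inner_cnj:
  assumes w: "cmod \<omega> = 1" and x: "x \<in> group_alg" and y: "y \<in> group_alg"
  shows "ind_inner \<omega> x y = cnj (ind_inner \<omega> y x)"
  using avg_inner_tendsto[OF w x y] tendsto_cnj[OF avg_inner_tendsto[OF w y x]]
  by (simp add: avg_inner_cnj[of _ _ x] LIMSEQ_unique)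

lemma ind_inner_conv_adjoint:
  assumes w: "cmod \<omega> = 1" and a: "a \<in> group_alg" and x: "x \<in> group_alg" and y: "y \<in> group_alg"
  shows "ind_inner \<omega> (conv a x) y = ind_inner \<omega> x (conv (inv_star a) y)"
  using avg_inner_tendsto[OF w group_alg_conv[OF a x] y]
    avg_inner_tendsto[OF w x group_alg_conv[OF group_alg_inv_star[OF a] y]]
  by (simp add: avg_inner_conv_adjoint[OF a x y] LIMSEQ_unique)

lemma ind_sqnorm_conv_le:
  assumes w: "cmod \<omega> = 1" and a: "a \<in> group_alg" and v: "v \<in> group_alg"
  shows "ind_sqnorm \<omega> (conv a v) \<le> (reduced_norm a)^2 * ind_sqnorm \<omega> v"
proof (rule tendsto_le[OF trivial_limit_sequentially])
  show "(\<lambda>N. (reduced_norm a)^2 * avg_sqnorm \<omega> N v) \<longlonglongrightarrow> (reduced_norm a)^2 * ind_sqnorm \<omega> v"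
    by (intro tendsto_mult tendsto_const avg_sqnorm_tendsto w v)
  show "(\<lambda>N. avg_sqnorm \<omega> N (conv a v)) \<longlonglongrightarrow> ind_sqnorm \<omega> (conv a v)"
    by (intro avg_sqnorm_tendsto w group_alg_conv a v)
qed (intro always_eventually allI avg_sqnorm_conv_le a v)

lemma ind_inner_zero_left: "ind_inner \<omega> (\<lambda>_. 0) y = 0"
  by (simp add: ind_inner_def supp_def)

lemma ind_sqnorm_zero: "ind_sqnorm \<omega> (\<lambda>_. 0) = 0"
  by (simp add: ind_sqnorm_def ind_inner_zero_left)

lemma ind_inner_transl_z:
  assumes w: "cmod \<omega> = 1" and v: "v \<in> group_alg" and y: "y \<in> group_alg"
  shows "ind_inner \<omega> (transl z v) y = \<omega> * ind_inner \<omega> v y"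
proof -
  have w0: "\<omega> \<noteq> 0" using w by auto
  have key: "zchar \<omega> (- h + (z + g)) = \<omega> * zchar \<omega> (- h + g)" for h g
  proof -
    have "- h + (z + g) = int_mult 1 + (- h + g)"
      by (simp add: add.assoc[symmetric] z_commute[of "- h", symmetric])
    then show ?thesis using zchar_shift[OF w0, of 1] by simp
  qed
  have "ind_inner \<omega> (transl z v) y =
      (\<Sum>g\<in>(+) z ` supp v. \<Sum>h\<in>supp y. transl z v g * cnj (y h) * zchar \<omega> (- h + g))"
    by (simp add: ind_inner_def supp_transl)
  also have "\<dots> = (\<Sum>g\<in>supp v. \<Sum>h\<in>supp y. v g * cnj (y h) * zchar \<omega> (- h + (z + g)))"
    by (subst sum.reindex) (auto simp: inj_on_def transl_def add.assoc[symmetric])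
  also have "\<dots> = \<omega> * ind_inner \<omega> v y"
    by (simp add: key ind_inner_def sum_distrib_left mult.commute mult.left_commute)
  finally show ?thesis .
qed

lemma ind_sqnorm_add_transl_z:
  assumes w: "cmod \<omega> = 1" and v: "v \<in> group_alg"
  shows "ind_sqnorm \<omega> (\<lambda>g. v g + transl z v g) = (2 + 2 * Re \<omega>) * ind_sqnorm \<omega> v"
proof -
  let ?t = "transl z v"
  have t: "?t \<in> group_alg" by (rule group_alg_transl[OF v])
  define b where "b = ind_inner \<omega> v v"
  have b: "b = complex_of_real (ind_sqnorm \<omega> v)" by (simp add: b_def ind_inner_self[OF w v])
  have tv: "ind_inner \<omega> ?t v = \<omega> * b"
    by (simp add: b_def ind_inner_transl_z[OF w v v])
  have vt: "ind_inner \<omega> v ?t = cnj \<omega> * b"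
    using ind_inner_cnj[OF w v t] tv b by simp
  have tt: "ind_inner \<omega> ?t ?t = b"
  proof -
    have "ind_inner \<omega> ?t ?t = \<omega> * ind_inner \<omega> v ?t"
      by (rule ind_inner_transl_z[OF w v t])
    then show ?thesis using vt w by (simp add: mult.assoc[symmetric] complex_norm_square[symmetric])
  qed
  have "ind_inner \<omega> (\<lambda>g. v g + ?t g) (\<lambda>g. v g + ?t g) =
      ind_inner \<omega> v (\<lambda>g. v g + ?t g) + ind_inner \<omega> ?t (\<lambda>g. v g + ?t g)"
    by (rule ind_inner_add_left[OF w v t group_alg_add[OF v t]])
  also have "ind_inner \<omega> v (\<lambda>g. v g + ?t g) = cnj (ind_inner \<omega> v v + ind_inner \<omega> ?t v)"
    by (simp add: ind_inner_cnj[OF w v group_alg_add[OF v t]] ind_inner_add_left[OF w v t v])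
  also have "ind_inner \<omega> ?t (\<lambda>g. v g + ?t g) = cnj (ind_inner \<omega> v ?t + ind_inner \<omega> ?t ?t)"
    by (simp add: ind_inner_cnj[OF w t group_alg_add[OF v t]] ind_inner_add_left[OF w v t t])
  finally have "ind_inner \<omega> (\<lambda>g. v g + ?t g) (\<lambda>g. v g + ?t g) =
      cnj (b + \<omega> * b) + cnj (cnj \<omega> * b + b)"
    by (simp add: tv vt tt b_def)
  then show ?thesis by (simp add: ind_sqnorm_def b algebra_simps)
qed

lemma ind_sqnorm_smult:
  assumes w: "cmod \<omega> = 1" and x: "x \<in> group_alg"
  shows "ind_sqnorm \<omega> (\<lambda>g. c * x g) = (cmod c)^2 * ind_sqnorm \<omega> x"
  using avg_sqnorm_tendsto[OF w group_alg_smult[OF x, of c]]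
    tendsto_mult[OF tendsto_const[of "(cmod c)^2"] avg_sqnorm_tendsto[OF w x]]
  by (simp add: avg_sqnorm_smult[OF x] LIMSEQ_unique)

section \<open>A C*-norm dominated by the reduced norm\<close>

text \<open>The norm of left convolution by a on the direct sum of the induced representations over the
  half circle.\<close>

definition sup_ind_norm :: "('g \<Rightarrow> complex) \<Rightarrow> real" where
  "sup_ind_norm a = Sup {sqrt (ind_sqnorm \<omega> (conv a v)) | \<omega> v.
     \<omega> \<in> half_circle \<and> v \<in> group_alg \<and> ind_sqnorm \<omega> v \<le> 1}"

lemma sqrt_ind_sqnorm_conv_le_reduced_norm:
  assumes a: "a \<in> group_alg" and \<omega>: "\<omega> \<in> half_circle" and v: "v \<in> group_alg"
    and q: "ind_sqnorm \<omega> v \<le> 1"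
  shows "sqrt (ind_sqnorm \<omega> (conv a v)) \<le> reduced_norm a"
proof -
  have "ind_sqnorm \<omega> (conv a v) \<le> (reduced_norm a)^2 * ind_sqnorm \<omega> v"
    by (rule ind_sqnorm_conv_le[OF half_circle_norm[OF \<omega>] a v])
  also have "\<dots> \<le> (reduced_norm a)^2"
    using mult_left_mono[OF q, of "(reduced_norm a)^2"] by simp
  finally show ?thesis
    using reduced_norm_nonneg[OF a] real_sqrt_le_mono by fastforce
qed

lemma sup_ind_norm_upper:
  assumes "a \<in> group_alg" "\<omega> \<in> half_circle" "v \<in> group_alg" "ind_sqnorm \<omega> v \<le> 1"
  shows "sqrt (ind_sqnorm \<omega> (conv a v)) \<le> sup_ind_norm a"
  unfolding sup_ind_norm_def
proof (rule cSup_upper)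
  show "bdd_above {sqrt (ind_sqnorm \<omega> (conv a v)) | \<omega> v.
      \<omega> \<in> half_circle \<and> v \<in> group_alg \<and> ind_sqnorm \<omega> v \<le> 1}"
    using sqrt_ind_sqnorm_conv_le_reduced_norm[OF assms(1)] by (auto intro!: bdd_aboveI)
qed (use assms in blast)

lemma sup_ind_norm_least:
  assumes "\<And>\<omega> v. \<omega> \<in> half_circle \<Longrightarrow> v \<in> group_alg \<Longrightarrow> ind_sqnorm \<omega> v \<le> 1 \<Longrightarrow>
    sqrt (ind_sqnorm \<omega> (conv a v)) \<le> M"
  shows "sup_ind_norm a \<le> M"
  unfolding sup_ind_norm_def
proof (rule cSup_least)
  have "(-1::complex) \<in> half_circle" by (simp add: half_circle_def)
  then show "{sqrt (ind_sqnorm \<omega> (conv a v)) | \<omega> v.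
      \<omega> \<in> half_circle \<and> v \<in> group_alg \<and> ind_sqnorm \<omega> v \<le> 1} \<noteq> {}"
    using group_alg_zero ind_sqnorm_zero by fastforce
qed (use assms in blast)

lemma sup_ind_norm_nonneg: "a \<in> group_alg \<Longrightarrow> 0 \<le> sup_ind_norm a"
  using sup_ind_norm_upper[of a "-1" "\<lambda>_. 0"]
  by (simp add: half_circle_def conv_zero_right ind_sqnorm_zero)

lemma sup_ind_norm_le_reduced_norm: "a \<in> group_alg \<Longrightarrow> sup_ind_norm a \<le> reduced_norm a"
  by (rule sup_ind_norm_least) (rule sqrt_ind_sqnorm_conv_le_reduced_norm)

lemma sqrt_ind_sqnorm_conv_le:
  assumes a: "a \<in> group_alg" and o: "\<omega> \<in> half_circle" and x: "x \<in> group_alg"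
  shows "sqrt (ind_sqnorm \<omega> (conv a x)) \<le> sup_ind_norm a * sqrt (ind_sqnorm \<omega> x)"
proof -
  have w: "cmod \<omega> = 1" using o by (rule half_circle_norm)
  show ?thesis
  proof (cases "ind_sqnorm \<omega> x = 0")
    case True
    have "ind_sqnorm \<omega> (conv a x) \<le> (reduced_norm a)^2 * ind_sqnorm \<omega> x"
      by (rule ind_sqnorm_conv_le[OF w a x])
    then have "ind_sqnorm \<omega> (conv a x) = 0"
      using True ind_inner_self(2)[OF w group_alg_conv[OF a x]] by simp
    then show ?thesis using sup_ind_norm_nonneg[OF a] True by simp
  next
    case False
    define t where "t = sqrt (ind_sqnorm \<omega> x)"
    have t0: "t > 0" using False ind_inner_self(2)[OF w x] by (simp add: t_def)
    define v where "v = (\<lambda>g. complex_of_real (1/t) * x g)"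
    have v: "v \<in> group_alg" unfolding v_def by (rule group_alg_smult[OF x])
    have "ind_sqnorm \<omega> v = (cmod (complex_of_real (1/t)))^2 * ind_sqnorm \<omega> x"
      unfolding v_def by (rule ind_sqnorm_smult[OF w x])
    also have "\<dots> = (1/t)^2 * ind_sqnorm \<omega> x"
      by (simp only: norm_of_real) (use t0 in simp)
    also have "\<dots> = 1" using t0 ind_inner_self(2)[OF w x] by (simp add: t_def power_divide)
    finally have qv: "ind_sqnorm \<omega> v = 1" .
    have ce: "conv a v = (\<lambda>g. complex_of_real (1/t) * conv a x g)"
      unfolding v_def by (rule conv_smult_right)
    have "ind_sqnorm \<omega> (conv a v) = (cmod (complex_of_real (1/t)))^2 * ind_sqnorm \<omega> (conv a x)"
      by (simp only: ce ind_sqnorm_smult[OF w group_alg_conv[OF a x]])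
    then have "sqrt (ind_sqnorm \<omega> (conv a v)) = sqrt (ind_sqnorm \<omega> (conv a x)) / t"
      using t0 by (simp add: real_sqrt_mult real_sqrt_divide norm_divide)
    moreover have "sqrt (ind_sqnorm \<omega> (conv a v)) \<le> sup_ind_norm a"
      by (rule sup_ind_norm_upper[OF a o v]) (simp add: qv)
    ultimately have "sqrt (ind_sqnorm \<omega> (conv a x)) / t \<le> sup_ind_norm a" by simp
    then show ?thesis using t0 by (simp add: t_def divide_le_eq mult.commute)
  qed
qed

lemma ind_inner_eq_powi_sum:
  "ind_inner \<omega> x y = (\<Sum>(g, h)\<in>supp x \<times> supp y.
     (if - h + g \<in> range int_mult then x g * cnj (y h) else 0) * \<omega> powi inv int_mult (- h + g))"
  unfolding ind_inner_def zchar_def sum.cartesian_product by (intro sum.cong) auto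

lemma exists_ind_sqnorm_pos:
  assumes a: "a \<in> group_alg" and a0: "a \<noteq> (\<lambda>_. 0)"
  shows "\<exists>\<omega>\<in>half_circle. ind_sqnorm \<omega> a > 0"
proof -
  define S where "S = supp a"
  define c where "c = (\<lambda>(g, h). if - h + g \<in> range int_mult then a g * cnj (a h) else 0)"
  define e where "e = (\<lambda>(g, h). inv int_mult (- h + g))"
  define Z where "Z = {\<omega>. \<omega> \<noteq> 0 \<and> (\<Sum>p\<in>S \<times> S. c p * \<omega> powi e p) = 0}"
  have fin: "finite (S \<times> S)" using a by (simp add: S_def group_alg_iff_finite_supp)
  have "(\<Sum>p\<in>{p\<in>S \<times> S. e p = 0}. c p) = (\<Sum>p\<in>(\<lambda>g. (g, g)) ` S. c p)"
  proof (rule sum.mono_neutral_right)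
    show "(\<lambda>g. (g, g)) ` S \<subseteq> {p\<in>S \<times> S. e p = 0}"
      using inv_f_f[OF inj_int_mult, of 0] by (auto simp: e_def)
    show "\<forall>p\<in>{p\<in>S \<times> S. e p = 0} - (\<lambda>g. (g, g)) ` S. c p = 0"
      by (auto simp: c_def e_def inv_f_f[OF inj_int_mult] minus_add_eq_0_iff)
  qed (use fin in auto)
  also have "\<dots> = (\<Sum>g\<in>S. a g * cnj (a g))"
    using rangeI[of int_mult 0] by (simp add: sum.reindex inj_on_def c_def)
  also have "\<dots> = of_real (\<Sum>g\<in>S. (cmod (a g))^2)"
    by (simp only: complex_norm_square of_real_sum)
  also have "\<dots> \<noteq> 0"
  proof -
    obtain g where "a g \<noteq> 0" using a0 by (meson ext)
    then have "(\<Sum>g\<in>S. (cmod (a g))^2) > 0"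
      using a by (intro sum_pos2[of S g]) (simp_all add: S_def supp_def group_alg_iff_finite_supp)
    then show ?thesis by (metis less_irrefl of_real_eq_0_iff)
  qed
  finally have "finite Z" unfolding Z_def by (rule finite_zeros_powi_sum[OF fin])
  then have "\<not> half_circle \<subseteq> Z" using infinite_half_circle finite_subset by blast
  then obtain \<omega> where \<omega>: "\<omega> \<in> half_circle" "\<omega> \<notin> Z" by blast
  have "ind_inner \<omega> a a = (\<Sum>p\<in>S \<times> S. c p * \<omega> powi e p)"
    unfolding ind_inner_eq_powi_sum S_def c_def e_def by (intro sum.cong) auto
  also have "\<dots> \<noteq> 0"
    using \<omega> half_circle_norm[OF \<omega>(1)] by (auto simp: Z_def)
  finally have "ind_inner \<omega> a a \<noteq> 0" .
  then have "ind_sqnorm \<omega> a \<noteq> 0"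
    using ind_inner_self(1)[OF half_circle_norm[OF \<omega>(1)] a] by simp
  then show ?thesis
    using \<omega>(1) ind_inner_self(2)[OF half_circle_norm[OF \<omega>(1)] a] by force
qed

lemma ind_sqnorm_delta_0: "ind_sqnorm \<omega> (delta 0 1) = 1"
proof -
  have supp_delta: "supp (delta 0 (1::complex)) = {0}" by (auto simp: supp_def delta_def)
  have "ind_inner \<omega> (delta 0 1) (delta 0 1) = zchar \<omega> 0"
    unfolding ind_inner_def supp_delta by (simp add: delta_def)
  then show ?thesis using zchar_int_mult[of \<omega> 0] by (simp add: ind_sqnorm_def)
qed

lemma sup_ind_norm_zero: "sup_ind_norm (\<lambda>_. 0) = 0"
proof -
  have "sup_ind_norm (\<lambda>_. 0) \<le> 0"
    by (rule sup_ind_norm_least) (simp add: conv_zero_left ind_sqnorm_zero)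
  then show ?thesis using sup_ind_norm_nonneg[OF group_alg_zero] by simp
qed

lemma sup_ind_norm_eq_0_iff:
  assumes a: "a \<in> group_alg"
  shows "sup_ind_norm a = 0 \<longleftrightarrow> a = (\<lambda>_. 0)"
proof
  assume n: "sup_ind_norm a = 0"
  show "a = (\<lambda>_. 0)"
  proof (rule ccontr)
    assume "a \<noteq> (\<lambda>_. 0)"
    then obtain \<omega> where o: "\<omega> \<in> half_circle" and q: "ind_sqnorm \<omega> a > 0"
      using exists_ind_sqnorm_pos[OF a] by blast
    have "sqrt (ind_sqnorm \<omega> (conv a (delta 0 1))) \<le> sup_ind_norm a"
      by (rule sup_ind_norm_upper[OF a o group_alg_delta]) (simp add: ind_sqnorm_delta_0)
    then have "sqrt (ind_sqnorm \<omega> a) \<le> 0" using n by (simp add: conv_delta_0_right[OF a])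
    then show False using q by simp
  qed
qed (simp add: sup_ind_norm_zero)

lemma sup_ind_norm_triangle:
  assumes a: "a \<in> group_alg" and b: "b \<in> group_alg"
  shows "sup_ind_norm (\<lambda>g. a g + b g) \<le> sup_ind_norm a + sup_ind_norm b"
proof (rule sup_ind_norm_least)
  fix \<omega> v assume o: "\<omega> \<in> half_circle" and v: "v \<in> group_alg" and q: "ind_sqnorm \<omega> v \<le> 1"
  have w: "cmod \<omega> = 1" using o by (rule half_circle_norm)
  have "sqrt (ind_sqnorm \<omega> (conv (\<lambda>g. a g + b g) v))
      \<le> sqrt (ind_sqnorm \<omega> (conv a v)) + sqrt (ind_sqnorm \<omega> (conv b v))"
    unfolding conv_add_left[OF a b]
    by (rule sqrt_ind_sqnorm_triangle[OF w group_alg_conv[OF a v] group_alg_conv[OF b v]])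
  also have "\<dots> \<le> sup_ind_norm a + sup_ind_norm b"
    by (intro add_mono sup_ind_norm_upper[OF a o v q] sup_ind_norm_upper[OF b o v q])
  finally show "sqrt (ind_sqnorm \<omega> (conv (\<lambda>g. a g + b g) v)) \<le> sup_ind_norm a + sup_ind_norm b" .
qed

lemma sup_ind_norm_smult_le:
  assumes a: "a \<in> group_alg"
  shows "sup_ind_norm (\<lambda>g. c * a g) \<le> cmod c * sup_ind_norm a"
proof (rule sup_ind_norm_least)
  fix \<omega> v assume o: "\<omega> \<in> half_circle" and v: "v \<in> group_alg" and q: "ind_sqnorm \<omega> v \<le> 1"
  have w: "cmod \<omega> = 1" using o by (rule half_circle_norm)
  have "ind_sqnorm \<omega> (conv (\<lambda>g. c * a g) v) = (cmod c)^2 * ind_sqnorm \<omega> (conv a v)"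
    by (simp only: conv_smult_left[OF a] ind_sqnorm_smult[OF w group_alg_conv[OF a v]])
  then have "sqrt (ind_sqnorm \<omega> (conv (\<lambda>g. c * a g) v)) = cmod c * sqrt (ind_sqnorm \<omega> (conv a v))"
    by (simp add: real_sqrt_mult)
  also have "\<dots> \<le> cmod c * sup_ind_norm a"
    by (intro mult_left_mono sup_ind_norm_upper[OF a o v q] norm_ge_zero)
  finally show "sqrt (ind_sqnorm \<omega> (conv (\<lambda>g. c * a g) v)) \<le> cmod c * sup_ind_norm a" .
qed

lemma sup_ind_norm_smult:
  assumes a: "a \<in> group_alg"
  shows "sup_ind_norm (\<lambda>g. c * a g) = cmod c * sup_ind_norm a"
proof (cases "c = 0")
  case True
  then show ?thesis by (simp add: sup_ind_norm_zero)
next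
  case False
  have ca: "(\<lambda>g. c * a g) \<in> group_alg" by (rule group_alg_smult[OF a])
  have "(\<lambda>g. inverse c * (c * a g)) = a" using False by (simp add: mult.assoc[symmetric])
  then have "sup_ind_norm a = sup_ind_norm (\<lambda>g. inverse c * (c * a g))" by simp
  also have "\<dots> \<le> cmod (inverse c) * sup_ind_norm (\<lambda>g. c * a g)"
    by (rule sup_ind_norm_smult_le[OF ca])
  finally have "cmod c * sup_ind_norm a \<le> cmod c * (cmod (inverse c) * sup_ind_norm (\<lambda>g. c * a g))"
    by (rule mult_left_mono) simp
  also have "\<dots> = sup_ind_norm (\<lambda>g. c * a g)" using False by (simp add: norm_inverse)
  finally show ?thesis using sup_ind_norm_smult_le[OF a, of c] by simp
qed

lemma sup_ind_norm_conv_le: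
  assumes a: "a \<in> group_alg" and b: "b \<in> group_alg"
  shows "sup_ind_norm (conv a b) \<le> sup_ind_norm a * sup_ind_norm b"
proof (rule sup_ind_norm_least)
  fix \<omega> v assume o: "\<omega> \<in> half_circle" and v: "v \<in> group_alg" and q: "ind_sqnorm \<omega> v \<le> 1"
  have "sqrt (ind_sqnorm \<omega> (conv (conv a b) v)) = sqrt (ind_sqnorm \<omega> (conv a (conv b v)))"
    by (simp add: conv_assoc a b)
  also have "\<dots> \<le> sup_ind_norm a * sqrt (ind_sqnorm \<omega> (conv b v))"
    by (rule sqrt_ind_sqnorm_conv_le[OF a o group_alg_conv[OF b v]])
  also have "\<dots> \<le> sup_ind_norm a * sup_ind_norm b"
    by (intro mult_left_mono sup_ind_norm_upper[OF b o v q] sup_ind_norm_nonneg a)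
  finally show "sqrt (ind_sqnorm \<omega> (conv (conv a b) v)) \<le> sup_ind_norm a * sup_ind_norm b" .
qed

lemma sup_ind_norm_square_le:
  assumes a: "a \<in> group_alg"
  shows "(sup_ind_norm a)^2 \<le> sup_ind_norm (conv (inv_star a) a)"
proof -
  have as: "inv_star a \<in> group_alg" by (rule group_alg_inv_star[OF a])
  have aa: "conv (inv_star a) a \<in> group_alg" by (rule group_alg_conv[OF as a])
  have "sup_ind_norm a \<le> sqrt (sup_ind_norm (conv (inv_star a) a))"
  proof (rule sup_ind_norm_least)
    fix \<omega> v assume o: "\<omega> \<in> half_circle" and v: "v \<in> group_alg" and q: "ind_sqnorm \<omega> v \<le> 1"
    have w: "cmod \<omega> = 1" using o by (rule half_circle_norm)
    let ?w = "conv (conv (inv_star a) a) v"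
    have wg: "?w \<in> group_alg" by (rule group_alg_conv[OF aa v])
    have "ind_sqnorm \<omega> (conv a v) = Re (ind_inner \<omega> (conv a v) (conv a v))"
      by (rule ind_sqnorm_def)
    also have "\<dots> = Re (ind_inner \<omega> v ?w)"
      by (simp add: ind_inner_conv_adjoint[OF w a v group_alg_conv[OF a v]] conv_assoc as a)
    also have "\<dots> \<le> cmod (ind_inner \<omega> v ?w)" by (rule complex_Re_le_cmod)
    also have "\<dots> \<le> sqrt (ind_sqnorm \<omega> v) * sqrt (ind_sqnorm \<omega> ?w)"
      by (rule ind_inner_Cauchy_Schwarz[OF w v wg])
    also have "\<dots> \<le> 1 * sqrt (ind_sqnorm \<omega> ?w)"
      by (rule mult_right_mono) (use q ind_inner_self(2)[OF w wg] in simp_all)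
    also have "\<dots> \<le> sup_ind_norm (conv (inv_star a) a)"
      using sup_ind_norm_upper[OF aa o v q] by simp
    finally show "sqrt (ind_sqnorm \<omega> (conv a v)) \<le> sqrt (sup_ind_norm (conv (inv_star a) a))"
      by (rule real_sqrt_le_mono)
  qed
  then have "(sup_ind_norm a)^2 \<le> (sqrt (sup_ind_norm (conv (inv_star a) a)))^2"
    by (rule power_mono) (rule sup_ind_norm_nonneg[OF a])
  also have "\<dots> = sup_ind_norm (conv (inv_star a) a)" using sup_ind_norm_nonneg[OF aa] by simp
  finally show ?thesis .
qed

lemma sup_ind_norm_le_inv_star:
  assumes a: "a \<in> group_alg"
  shows "sup_ind_norm a \<le> sup_ind_norm (inv_star a)"
proof (cases "sup_ind_norm a = 0")
  case True then show ?thesis using sup_ind_norm_nonneg[OF group_alg_inv_star[OF a]] by simp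
next
  case False
  then have p: "sup_ind_norm a > 0" using sup_ind_norm_nonneg[OF a] by simp
  have "sup_ind_norm a * sup_ind_norm a \<le> sup_ind_norm (inv_star a) * sup_ind_norm a"
    using sup_ind_norm_square_le[OF a] sup_ind_norm_conv_le[OF group_alg_inv_star[OF a] a]
    by (simp add: power2_eq_square)
  then show ?thesis using p by simp
qed

lemma sup_ind_norm_cstar_identity:
  assumes a: "a \<in> group_alg"
  shows "sup_ind_norm (conv (inv_star a) a) = (sup_ind_norm a)^2"
proof -
  have "sup_ind_norm (inv_star a) \<le> sup_ind_norm a"
    using sup_ind_norm_le_inv_star[OF group_alg_inv_star[OF a]] by simp
  then have e: "sup_ind_norm (inv_star a) = sup_ind_norm a"
    using sup_ind_norm_le_inv_star[OF a] by simp
  have "sup_ind_norm (conv (inv_star a) a) \<le> sup_ind_norm (inv_star a) * sup_ind_norm a"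
    by (rule sup_ind_norm_conv_le[OF group_alg_inv_star[OF a] a])
  then have "sup_ind_norm (conv (inv_star a) a) \<le> (sup_ind_norm a)^2"
    by (simp add: e power2_eq_square)
  then show ?thesis using sup_ind_norm_square_le[OF a] by simp
qed

section \<open>The two norms differ at \<delta>_0 + \<delta>_z\<close>

definition delta_0_plus_z :: "'g \<Rightarrow> complex" where "delta_0_plus_z = (\<lambda>g. delta 0 1 g + delta z 1 g)"

lemma group_alg_delta_0_plus_z: "delta_0_plus_z \<in> group_alg"
  unfolding delta_0_plus_z_def by (intro group_alg_add group_alg_delta)

lemma conv_delta_0_plus_z: "conv delta_0_plus_z v = (\<lambda>g. v g + transl z v g)"
  unfolding delta_0_plus_z_def by (simp add: conv_add_left group_alg_delta conv_delta_left)

lemma sup_ind_norm_delta_0_plus_z: "sup_ind_norm delta_0_plus_z \<le> sqrt 2"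
proof (rule sup_ind_norm_least)
  fix \<omega> v assume o: "\<omega> \<in> half_circle" and v: "v \<in> group_alg" and q: "ind_sqnorm \<omega> v \<le> 1"
  have w: "cmod \<omega> = 1" using o by (rule half_circle_norm)
  have r0: "Re \<omega> \<le> 0" using o by (simp add: half_circle_def)
  have r1: "Re \<omega> \<ge> -1" using abs_Re_le_cmod[of \<omega>] w by simp
  have q0: "ind_sqnorm \<omega> v \<ge> 0" by (rule ind_inner_self(2)[OF w v])
  have "ind_sqnorm \<omega> (conv delta_0_plus_z v) = (2 + 2 * Re \<omega>) * ind_sqnorm \<omega> v"
    by (simp add: conv_delta_0_plus_z ind_sqnorm_add_transl_z[OF w v])
  also have "\<dots> \<le> (2 + 2 * Re \<omega>) * 1"
    by (rule mult_left_mono[OF q]) (use r1 in simp)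
  also have "\<dots> \<le> 2" using r0 by simp
  finally show "sqrt (ind_sqnorm \<omega> (conv delta_0_plus_z v)) \<le> sqrt 2"
    by (rule real_sqrt_le_mono)
qed

lemma l2_sqnorm_delta_0_plus_z: "l2_sqnorm delta_0_plus_z = 2"
proof -
  have "l2_sqnorm delta_0_plus_z = (\<Sum>g\<in>{0, z}. (cmod (delta_0_plus_z g))^2)"
    by (rule l2_sqnorm_eq_sum) (auto simp: supp_def delta_0_plus_z_def delta_def)
  then show ?thesis using z_neq_0 by (simp add: delta_0_plus_z_def delta_def)
qed

lemma l2_sqnorm_conv_delta_0_plus_z: "l2_sqnorm (conv delta_0_plus_z delta_0_plus_z) \<ge> 5"
proof -
  define c where "c = conv delta_0_plus_z delta_0_plus_z"
  define A where "A = supp c \<union> {z, z + z}"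
  have "finite A"
    using group_alg_conv[OF group_alg_delta_0_plus_z group_alg_delta_0_plus_z]
    by (simp add: A_def c_def group_alg_iff_finite_supp)
  have "c z = 2" "c (z + z) = 1"
    unfolding c_def conv_delta_0_plus_z transl_def
    using z_neq_0 z_plus_z_neq_0 z_plus_z_neq_z
    by (simp_all add: delta_0_plus_z_def delta_def add.assoc[symmetric])
  then have "(\<Sum>g\<in>{z, z + z}. (cmod (c g))^2) = 5"
    using z_plus_z_neq_z by simp
  moreover have "(\<Sum>g\<in>{z, z + z}. (cmod (c g))^2) \<le> (\<Sum>g\<in>A. (cmod (c g))^2)"
    by (rule sum_mono2[OF \<open>finite A\<close>]) (auto simp: A_def)
  moreover have "(\<Sum>g\<in>A. (cmod (c g))^2) = l2_sqnorm c"
    by (rule l2_sqnorm_eq_sum[OF \<open>finite A\<close>, symmetric]) (auto simp: A_def)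
  ultimately show ?thesis by (simp add: c_def)
qed

lemma reduced_norm_delta_0_plus_z: "sqrt 2 < reduced_norm delta_0_plus_z"
proof (rule real_less_lsqrt)
  show "0 \<le> reduced_norm delta_0_plus_z"
    by (rule reduced_norm_nonneg[OF group_alg_delta_0_plus_z])
  have "5 \<le> (reduced_norm delta_0_plus_z)^2 * 2"
    using l2_sqnorm_conv_delta_0_plus_z l2_sqnorm_delta_0_plus_z
      l2_sqnorm_conv_le[OF group_alg_delta_0_plus_z group_alg_delta_0_plus_z] by simp
  then show "2 < (reduced_norm delta_0_plus_z)^2" by simp
qed

lemma sup_ind_norm_less_reduced_norm: "\<exists>a\<in>group_alg. sup_ind_norm a < reduced_norm a"
  using sup_ind_norm_delta_0_plus_z reduced_norm_delta_0_plus_z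
  by (intro bexI[OF _ group_alg_delta_0_plus_z]) simp

lemma is_cstar_norm_sup_ind_norm: "is_cstar_norm sup_ind_norm"
  unfolding is_cstar_norm_def
  by (simp add: sup_ind_norm_nonneg sup_ind_norm_eq_0_iff sup_ind_norm_triangle sup_ind_norm_smult
      sup_ind_norm_conv_le sup_ind_norm_cstar_identity)

end

theorem proposition3:
  fixes z :: "'g::{group_add, countable}"
  assumes "central z" and "infinite_order z"
  shows "\<not> cstar_r_unique TYPE('g)"
proof -
  interpret central_infinite_order z using assms by unfold_locales
  have "\<forall>a\<in>group_alg. sup_ind_norm a \<le> reduced_norm a"
    using sup_ind_norm_le_reduced_norm by blast
  then show ?thesis
    unfolding cstar_r_unique_def
    using is_cstar_norm_sup_ind_norm sup_ind_norm_less_reduced_norm by blast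
qed

end
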